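(* Assume $\delta<d$ and $\gamma\ge1$. Then $G_z(w)=\lim_{n\to\infty}d^{-n}\log^+|Q_z^n(w)|$ exists for every $(z,w)\in\mathbb{C}^2$, and is continuous and plurisubharmonic on $A_p\times\mathbb{C}$. Moreover, the limits $$G_f(z,w)=\lim_{n\to\infty}\frac{1}{d^n}\log^+\max\{|p^n(z)|,|Q_z^n(w)|\},\qquad G_f^\alpha(z,w)=\lim_{n\to\infty}\frac{1}{d^n}\log^+\max\{|p^n(z)|^{\max\{\alpha,0\}},|Q_z^n(w)|\}$$ exist on $\mathbb{C}^2$ and $G_z(w)=G_f(z,w)=G_f^\alpha(z,w)$ on $\mathbb{C}^2$; and $G_z(w)=G_z^\alpha(w):=\lim_{n\to\infty}d^{-n}\log^+\big(|Q_z^n(w)|/|p^n(z)|^\alpha\big)$ on $A_p\times\mathbb{C}$.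
   Context: Let $p(z)=z^\delta+O(z^{\delta-1})$ be a monic polynomial of degree $\delta\ge 2$, and let $q(z,w)=b(z)w^d+(\text{terms of lower degree in } w)$ be a polynomial with $d=\deg_w q\ge 2$, where $b$ is a monic polynomial of degree $\gamma$. Let $f(z,w)=(p(z),q(z,w))$. Write $Q_z^n=q_{p^{n-1}(z)}\circ\cdots\circ q_{p(z)}\circ q_z$ with $q_z=q(z,\cdot)$, so $f^n(z,w)=(p^n(z),Q_z^n(w))$. Let $A_p=\{z: p^n(z)\to\infty\}$. For $\delta<d$, $\alpha=\max\big(\{-\gamma/(d-\delta)\}\cup\{(n_j-\gamma)/(d-m_j)\}\big)$, the second set over monomials $z^{n_j}w^{m_j}$ appearing in $q$ with nonzero coefficient and $m_j<d$. *)

theory Defs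
  imports "HOL-Analysis.Analysis" "HOL-Computational_Algebra.Polynomial"
begin

definition logplus :: "real \<Rightarrow> real" where
  "logplus x = (if x \<le> 1 then 0 else ln x)"

definition rpow :: "real \<Rightarrow> real \<Rightarrow> real" where
  "rpow x a = (if a = 0 then 1 else x powr a)"

definition usc_on :: "'a::topological_space set \<Rightarrow> ('a \<Rightarrow> real) \<Rightarrow> bool" where
  "usc_on S u \<longleftrightarrow> (\<forall>x\<in>S. \<forall>t. u x < t \<longrightarrow> eventually (\<lambda>y. u y < t) (at x within S))"

definition subharmonic_on :: "complex set \<Rightarrow> (complex \<Rightarrow> real) \<Rightarrow> bool" where
  "subharmonic_on U u \<longleftrightarrow> usc_on U u \<and>
     (\<forall>a\<in>U. \<exists>r0>0. \<forall>r. 0 < r \<and> r < r0 \<longrightarrow>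
        set_integrable lborel {0..2*pi} (\<lambda>t. u (a + of_real r * cis t)) \<and>
        u a \<le> (1 / (2*pi)) * (LINT t:{0..2*pi}|lborel. u (a + of_real r * cis t)))"

definition plurisubharmonic_on :: "(complex \<times> complex) set \<Rightarrow> (complex \<times> complex \<Rightarrow> real) \<Rightarrow> bool" where
  "plurisubharmonic_on \<Omega> u \<longleftrightarrow> open \<Omega> \<and> usc_on \<Omega> u \<and>
     (\<forall>a\<in>\<Omega>. \<forall>b. subharmonic_on {s::complex. a + (s * fst b, s * snd b) \<in> \<Omega>}
                     (\<lambda>s. u (a + (s * fst b, s * snd b))))"

text \<open>q(z,w) as a polynomial in w whose coefficients are polynomials in z.\<close>
definition evalq :: "complex poly poly \<Rightarrow> complex \<Rightarrow> complex \<Rightarrow> complex" where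
  "evalq q z w = poly (map_poly (\<lambda>a. poly a z) q) w"

fun Qit :: "complex poly \<Rightarrow> complex poly poly \<Rightarrow> nat \<Rightarrow> complex \<Rightarrow> complex \<Rightarrow> complex" where
  "Qit p q 0 z w = w"
| "Qit p q (Suc n) z w = evalq q ((poly p ^^ n) z) (Qit p q n z w)"

definition escape_set :: "complex poly \<Rightarrow> complex set" where
  "escape_set p = {z. filterlim (\<lambda>n. (poly p ^^ n) z) at_infinity sequentially}"

text \<open>alpha = max ({-gamma/(d-delta)} \<union> {(n_j-gamma)/(d-m_j)}) over monomials z^n w^m of q with
  nonzero coefficient and m < d.\<close>
definition alpha_exp :: "complex poly \<Rightarrow> complex poly poly \<Rightarrow> real" where
  "alpha_exp p q = Max ({- real (degree (lead_coeff q)) / (real (degree q) - real (degree p))}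
     \<union> {(real n - real (degree (lead_coeff q))) / (real (degree q) - real m) | n m.
           coeff (coeff q m) n \<noteq> 0 \<and> m < degree q})"

end

theory Submission
  imports Defs "HOL-Computational_Algebra.Fundamental_Theorem_Algebra"
begin

text \<open>
  Let \<open>f(z, w) = (p(z), q(z, w))\<close> with \<open>deg p = \<delta> < d = deg\<^sub>w q\<close>, and let
  \<open>F\<^sub>n(z, w) = d\<^sup>-\<^sup>n log\<^sup>+ \<bar>Q\<^sub>z\<^sup>n(w)\<bar>\<close>.  Crude bounds \<open>log\<^sup>+ \<bar>p\<^sup>n(z)\<bar> = O(\<delta>\<^sup>n)\<close> and
  \<open>log\<^sup>+ \<bar>q(z, w)\<bar> \<le> C + E log\<^sup>+ \<bar>z\<bar> + d log\<^sup>+ \<bar>w\<bar>\<close> show that \<open>F\<^sub>n\<close> can increase only by a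
  summable amount, so \<open>F\<^sub>n\<close> converges everywhere to a limit \<open>G\<close>.  For \<open>z\<close> in the escape set
  \<open>A\<^sub>p\<close> the orbit \<open>p\<^sup>n(z)\<close> tends to infinity, and in the region \<open>\<bar>w\<bar> \<ge> R \<bar>z\<bar>\<^sup>\<alpha>\<close> the leading
  term \<open>b(z) w\<^sup>d\<close> dominates \<open>q\<close> (this is where the exponent \<open>\<alpha>\<close> enters).  Hence at each step
  \<open>F\<^sub>n\<close> either decreases by a summable amount or is already small, which gives convergence
  that is uniform on \<open>U \<times> \<complex>\<close> for a neighbourhood \<open>U\<close> of every point of \<open>A\<^sub>p\<close>.  Continuity of
  \<open>G\<close> follows, and so does plurisubharmonicity: on complex lines \<open>F\<^sub>n\<close> is \<open>log\<^sup>+\<close> of the modulus of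
  a polynomial, which satisfies the sub-mean value inequality (proved here by factoring and
  integrating the logarithm series), and that inequality survives uniform limits.
  The other normalisations of the Green function differ from \<open>F\<^sub>n\<close> by \<open>o(1)\<close>.
\<close>

lemma logplus_eq_ln_max: "logplus x = ln (max 1 x)"
  unfolding logplus_def by (auto simp: max_def)

lemma logplus_nonneg: "0 \<le> logplus x"
  unfolding logplus_eq_ln_max by simp

lemma logplus_mono: "x \<le> y \<Longrightarrow> logplus x \<le> logplus y"
  unfolding logplus_eq_ln_max by (simp add: max_def)

lemma logplus_eq_ln: "1 \<le> x \<Longrightarrow> logplus x = ln x"
  unfolding logplus_eq_ln_max by simp

lemma ln_le_logplus: "0 < x \<Longrightarrow> ln x \<le> logplus x"
  unfolding logplus_eq_ln_max by simp

lemma logplus_max: "logplus (max x y) = max (logplus x) (logplus y)"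
  by (simp add: max_def logplus_mono antisym)

lemma continuous_on_logplus: "continuous_on A logplus"
  unfolding logplus_eq_ln_max[abs_def] by (intro continuous_intros) auto

lemma logplus_mult_le:
  assumes "0 \<le> x" "0 \<le> y"
  shows "logplus (x * y) \<le> logplus x + logplus y"
proof -
  have "x * y \<le> max 1 x * max 1 y" using assms by (intro mult_mono) auto
  moreover have "1 * 1 \<le> max 1 x * max 1 y" by (rule mult_mono) auto
  ultimately have "max 1 (x * y) \<le> max 1 x * max 1 y" by simp
  hence "ln (max 1 (x * y)) \<le> ln (max 1 x * max 1 y)" by simp
  also have "\<dots> = ln (max 1 x) + ln (max 1 y)" by (simp add: ln_mult)
  finally show ?thesis unfolding logplus_eq_ln_max .
qed

lemma logplus_power:
  assumes "0 \<le> x"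
  shows "logplus (x ^ n) = real n * logplus x"
proof (cases "x \<le> 1")
  case True
  then have "x ^ n \<le> 1" using assms by (intro power_le_one)
  then show ?thesis using True by (simp add: logplus_def)
next
  case False
  then show ?thesis
    by (cases "n = 0") (auto simp: logplus_def one_less_power ln_realpow not_le)
qed

lemma logplus_max1_power: "logplus (max 1 t ^ k) = real k * logplus t"
  by (subst logplus_power) (auto simp: logplus_eq_ln_max)

lemma logplus_divide_diff:
  assumes "0 \<le> x" "0 < y"
  shows "\<bar>logplus (x / y) - logplus x\<bar> \<le> \<bar>ln y\<bar>"
proof -
  have up: "logplus x \<le> logplus (x / y) + logplus y"
    using logplus_mult_le[of "x / y" y] assms by simp
  have down: "logplus (x / y) \<le> logplus x + logplus (1 / y)"
    using logplus_mult_le[of x "1 / y"] assms by simp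
  show ?thesis
  proof (cases "y \<le> 1")
    case True
    then have "logplus y = 0" "logplus (1 / y) = - ln y" "ln y \<le> 0"
      using assms by (auto simp: logplus_def logplus_eq_ln ln_div)
    then show ?thesis using up down by linarith
  next
    case False
    then have "logplus y = ln y" "logplus (1 / y) = 0" "0 \<le> ln y"
      by (auto simp: logplus_def logplus_eq_ln)
    then show ?thesis using up down by linarith
  qed
qed

lemma logplus_rpow_le:
  assumes "0 \<le> x" "0 \<le> a"
  shows "logplus (rpow x a) \<le> a * logplus x"
proof (cases "a = 0 \<or> x = 0")
  case True
  then show ?thesis by (auto simp: rpow_def logplus_def)
next
  case False
  then have pos: "0 < x" "0 < a" using assms by auto
  have "rpow x a \<le> (max 1 x) powr a"
    using False pos by (auto simp: rpow_def intro: powr_mono2)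
  then have "logplus (rpow x a) \<le> logplus ((max 1 x) powr a)" by (rule logplus_mono)
  also have "\<dots> = a * ln (max 1 x)"
    using pos by (subst logplus_eq_ln) (auto intro: ge_one_powr_ge_zero simp: ln_powr)
  finally show ?thesis unfolding logplus_eq_ln_max .
qed

lemma logplus_powr_le:
  assumes "1 \<le> x"
  shows "logplus (x powr a) \<le> max a 0 * logplus x"
proof (cases "a \<le> 0")
  case True
  then have "x powr a \<le> x powr 0" using assms by (intro powr_mono) auto
  then show ?thesis using True assms by (simp add: logplus_def)
next
  case False
  then show ?thesis using logplus_rpow_le[of x a] assms by (simp add: rpow_def)
qed

lemma logplus_ge_of_power_le:
  assumes "y ^ k / c \<le> x" "0 \<le> y" "1 \<le> c"
  shows "real k * logplus y - ln c \<le> logplus x"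
proof -
  have "logplus (y ^ k) \<le> logplus (y ^ k / c) + logplus c"
    using logplus_mult_le[of "y ^ k / c" c] assms by simp
  moreover have "logplus (y ^ k / c) \<le> logplus x" by (rule logplus_mono[OF assms(1)])
  ultimately show ?thesis using logplus_power[OF assms(2), of k] logplus_eq_ln[OF assms(3)] by simp
qed


lemma poly_eq_sum_upto:
  fixes P :: "'a::comm_semiring_1 poly"
  assumes "degree P \<le> n"
  shows "poly P x = (\<Sum>i\<le>n. coeff P i * x ^ i)"
proof -
  have "poly P x = (\<Sum>i\<le>degree P. coeff P i * x ^ i)" by (simp add: poly_altdef)
  also have "\<dots> = (\<Sum>i\<le>n. coeff P i * x ^ i)"
    by (rule sum.mono_neutral_left) (use assms in \<open>auto simp: coeff_eq_0\<close>)
  finally show ?thesis .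
qed

lemma evalq_eq_sum: "evalq q z w = (\<Sum>m\<le>degree q. poly (coeff q m) z * w ^ m)"
proof -
  have "degree (map_poly (\<lambda>a. poly a z) q) \<le> degree q" by (rule map_poly_degree_leq)
  then show ?thesis unfolding evalq_def by (subst poly_eq_sum_upto) (auto simp: coeff_map_poly)
qed

lemma norm_poly_le:
  fixes P :: "complex poly"
  shows "norm (poly P x) \<le> (\<Sum>i\<le>degree P. norm (coeff P i)) * max 1 (norm x) ^ degree P"
proof -
  have "norm (poly P x) \<le> (\<Sum>i\<le>degree P. norm (coeff P i) * norm x ^ i)"
    unfolding poly_altdef by (rule order.trans[OF norm_sum]) (simp add: norm_mult norm_power)
  also have "\<dots> \<le> (\<Sum>i\<le>degree P. norm (coeff P i) * max 1 (norm x) ^ degree P)"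
  proof (intro sum_mono mult_left_mono)
    fix i assume "i \<in> {..degree P}"
    then show "norm x ^ i \<le> max 1 (norm x) ^ degree P"
      by (intro order.trans[OF power_mono[of "norm x" "max 1 (norm x)"] power_increasing]) auto
  qed auto
  finally show ?thesis by (simp add: sum_distrib_right)
qed

lemma logplus_norm_poly_le:
  fixes P :: "complex poly"
  shows "logplus (norm (poly P x))
           \<le> logplus (\<Sum>i\<le>degree P. norm (coeff P i)) + real (degree P) * logplus (norm x)"
proof -
  have "logplus (norm (poly P x))
          \<le> logplus ((\<Sum>i\<le>degree P. norm (coeff P i)) * max 1 (norm x) ^ degree P)"
    by (rule logplus_mono[OF norm_poly_le])
  also have "\<dots> \<le> logplus (\<Sum>i\<le>degree P. norm (coeff P i)) + logplus (max 1 (norm x) ^ degree P)"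
    by (rule logplus_mult_le) (auto intro: sum_nonneg)
  finally show ?thesis by (simp add: logplus_max1_power)
qed

lemma norm_poly_monic_ge:
  fixes P :: "complex poly"
  assumes "lead_coeff P = 1" "degree P = k" "1 \<le> k" "1 \<le> norm x"
  shows "norm x ^ (k - 1) * (norm x - (\<Sum>i<k. norm (coeff P i))) \<le> norm (poly P x)"
proof -
  define S where "S = (\<Sum>i<k. norm (coeff P i))"
  have "poly P x = (\<Sum>i<Suc k. coeff P i * x ^ i)"
    using assms(2) by (simp add: poly_altdef lessThan_Suc_atMost)
  also have "\<dots> = (\<Sum>i<k. coeff P i * x ^ i) + x ^ k" using assms(1,2) by simp
  finally have "norm (poly P x - x ^ k) \<le> (\<Sum>i<k. norm (coeff P i) * norm x ^ i)"
    by (simp add: norm_sum order.trans[OF norm_sum] norm_mult norm_power)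
  also have "\<dots> \<le> (\<Sum>i<k. norm (coeff P i) * norm x ^ (k - 1))"
    by (intro sum_mono mult_left_mono power_increasing) (use assms in auto)
  finally have "norm (poly P x - x ^ k) \<le> S * norm x ^ (k - 1)"
    by (simp add: S_def sum_distrib_right)
  moreover have "norm (x ^ k) - norm (poly P x - x ^ k) \<le> norm (poly P x)"
    by (metis add_diff_cancel_left' norm_diff_ineq diff_add_cancel add.commute)
  moreover have "norm x ^ k = norm x ^ (k - 1) * norm x"
    using assms(3) by (metis Suc_diff_le diff_Suc_1 power_Suc2 One_nat_def)
  ultimately show ?thesis by (simp add: S_def norm_power algebra_simps)
qed

definition qcoeff_sum :: "complex poly poly \<Rightarrow> real" where
  "qcoeff_sum q = (\<Sum>m\<le>degree q. \<Sum>i\<le>degree (coeff q m). norm (coeff (coeff q m) i))"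

definition qdeg_sum :: "complex poly poly \<Rightarrow> nat" where
  "qdeg_sum q = (\<Sum>m\<le>degree q. degree (coeff q m))"

lemma degree_coeff_le_qdeg_sum: "m \<le> degree q \<Longrightarrow> degree (coeff q m) \<le> qdeg_sum q"
  unfolding qdeg_sum_def by (intro member_le_sum) auto

lemma norm_evalq_le:
  "norm (evalq q z w) \<le> qcoeff_sum q * max 1 (norm z) ^ qdeg_sum q * max 1 (norm w) ^ degree q"
proof -
  let ?Mz = "max 1 (norm z)" and ?Mw = "max 1 (norm w)"
  let ?c = "\<lambda>m. \<Sum>i\<le>degree (coeff q m). norm (coeff (coeff q m) i)"
  have "norm (evalq q z w) \<le> (\<Sum>m\<le>degree q. norm (poly (coeff q m) z) * norm w ^ m)"
    unfolding evalq_eq_sum by (rule order.trans[OF norm_sum]) (simp add: norm_mult norm_power)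
  also have "\<dots> \<le> (\<Sum>m\<le>degree q. (?c m * ?Mz ^ qdeg_sum q) * ?Mw ^ degree q)"
  proof (intro sum_mono mult_mono)
    fix m assume m: "m \<in> {..degree q}"
    show "norm (poly (coeff q m) z) \<le> ?c m * ?Mz ^ qdeg_sum q"
      using m by (intro order.trans[OF norm_poly_le] mult_left_mono power_increasing
                        degree_coeff_le_qdeg_sum) (auto intro: sum_nonneg)
    show "norm w ^ m \<le> ?Mw ^ degree q"
      using m by (intro order.trans[OF power_mono[of "norm w" ?Mw] power_increasing]) auto
  qed (auto intro!: sum_nonneg mult_nonneg_nonneg)
  also have "\<dots> = qcoeff_sum q * ?Mz ^ qdeg_sum q * ?Mw ^ degree q"
    unfolding qcoeff_sum_def by (simp add: sum_distrib_right)
  finally show ?thesis .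
qed

lemma logplus_norm_evalq_le:
  "logplus (norm (evalq q z w))
     \<le> logplus (qcoeff_sum q) + real (qdeg_sum q) * logplus (norm z)
        + real (degree q) * logplus (norm w)"
proof -
  have "0 \<le> qcoeff_sum q" unfolding qcoeff_sum_def by (auto intro!: sum_nonneg)
  then have "logplus (norm (evalq q z w))
      \<le> logplus (qcoeff_sum q) + logplus (max 1 (norm z) ^ qdeg_sum q)
         + logplus (max 1 (norm w) ^ degree q)"
    by (intro order.trans[OF logplus_mono[OF norm_evalq_le]] order.trans[OF logplus_mult_le]
        add_right_mono logplus_mult_le) auto
  then show ?thesis by (simp add: logplus_max1_power)
qed

lemma monomial_le_in_region:
  fixes z w :: complex and R a g :: real and n m D :: nat
  assumes z1: "1 \<le> norm z" and R1: "1 \<le> R" and wR: "R * norm z powr a \<le> norm w"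
    and mD: "m < D" and n_le: "real n \<le> g + a * (real D - real m)"
  shows "norm z ^ n * norm w ^ m \<le> norm z powr g * norm w ^ D / R"
proof -
  define k where "k = D - m"
  have k1: "1 \<le> k" and rk: "real k = real D - real m" using mD by (auto simp: k_def)
  have zpos: "0 < norm z" using z1 by linarith
  then have za: "0 < norm z powr a" by simp
  have "R * norm z powr (real k * a) = R * (norm z powr a) ^ k"
    using zpos by (simp add: powr_power)
  also have "\<dots> \<le> R ^ k * (norm z powr a) ^ k"
    using R1 k1 za by (intro mult_right_mono) (auto simp: self_le_power)
  also have "\<dots> \<le> norm w ^ k"
    unfolding power_mult_distrib[symmetric] using wR R1 za by (intro power_mono) auto
  finally have wk: "R * norm z powr (real k * a) \<le> norm w ^ k" .
  have "norm z ^ n = norm z powr real n" using zpos by (simp add: powr_realpow)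
  also have "\<dots> \<le> norm z powr (g + real k * a)"
  proof (rule powr_mono)
    have "real k * a = a * (real D - real m)" by (simp add: rk mult.commute)
    then show "real n \<le> g + real k * a" using n_le by linarith
  qed (use z1 in auto)
  also have "\<dots> = norm z powr g * norm z powr (real k * a)" by (simp add: powr_add)
  also have "\<dots> \<le> norm z powr g * (norm w ^ k / R)"
    using wk R1 by (intro mult_left_mono) (auto simp: field_simps)
  finally have "norm z ^ n * norm w ^ m \<le> norm z powr g * (norm w ^ k / R) * norm w ^ m"
    by (intro mult_right_mono) auto
  also have "\<dots> = norm z powr g * norm w ^ D / R"
    using mD by (simp add: k_def power_add[symmetric])
  finally show ?thesis .
qed


text \<open>A nonnegative sequence that can increase at step \<open>n\<close> by at most \<open>e n\<close>, with \<open>e\<close>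
  summable, converges: subtracting the partial sums of \<open>e\<close> makes it decreasing.\<close>
lemma convergent_if_almost_decreasing:
  fixes a e :: "nat \<Rightarrow> real"
  assumes step: "\<And>n. a (Suc n) \<le> a n + e n"
    and e_nonneg: "\<And>n. 0 \<le> e n" and e_summable: "summable e" and a_nonneg: "\<And>n. 0 \<le> a n"
  shows "convergent a"
proof -
  define b where "b n = a n - (\<Sum>i<n. e i)" for n
  have "decseq b" unfolding b_def using step by (intro decseq_SucI) (simp add: algebra_simps)
  moreover have "\<forall>n. - suminf e \<le> b n"
  proof
    fix n
    have "(\<Sum>i<n. e i) \<le> suminf e" using e_nonneg by (intro sum_le_suminf[OF e_summable]) auto
    then show "- suminf e \<le> b n" using a_nonneg[of n] by (simp add: b_def)
  qed
  ultimately obtain L where "b \<longlonglongrightarrow> L" using decseq_convergent by blast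
  then have "(\<lambda>n. b n + (\<Sum>i<n. e i)) \<longlonglongrightarrow> L + suminf e"
    by (intro tendsto_add summable_LIMSEQ[OF e_summable])
  then show ?thesis by (auto simp: b_def convergent_def)
qed

lemma suminf_tail_tendsto_0:
  fixes e :: "nat \<Rightarrow> real"
  assumes "summable e"
  shows "(\<lambda>m. \<Sum>j. e (j + m)) \<longlonglongrightarrow> 0"
proof -
  have "(\<lambda>m. suminf e - (\<Sum>i<m. e i)) \<longlonglongrightarrow> suminf e - suminf e"
    by (intro tendsto_diff tendsto_const summable_LIMSEQ[OF assms])
  then show ?thesis by (simp add: suminf_minus_initial_segment[OF assms])
qed

lemma partial_tail_le_suminf_tail:
  fixes e :: "nat \<Rightarrow> real"
  assumes "summable e" "\<And>n. 0 \<le> e n"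
  shows "(\<Sum>j<i. e (m + j)) \<le> (\<Sum>j. e (j + m))"
  using sum_le_suminf[OF summable_ignore_initial_segment[OF assms(1), of m], of "{..<i}"] assms(2)
  by (simp add: add.commute)

lemma almost_constant_from:
  fixes a e :: "nat \<Rightarrow> real"
  assumes up: "\<And>j. m \<le> j \<Longrightarrow> a (Suc j) \<le> a j + e j"
    and down: "\<And>j. m \<le> j \<Longrightarrow> a j - e j \<le> a (Suc j) \<or> a j \<le> \<eta>"
    and e_nonneg: "\<And>j. 0 \<le> e j" and a_nonneg: "\<And>j. 0 \<le> a j" and \<eta>_nonneg: "0 \<le> \<eta>"
    and S: "\<And>i. (\<Sum>j<i. e (m + j)) \<le> S"
  shows "\<bar>a (m + i) - a m\<bar> \<le> S + \<eta>"
proof -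
  define s where "s i = (\<Sum>j<i. e (m + j))" for i
  have s_nonneg: "0 \<le> s i" for i unfolding s_def by (intro sum_nonneg e_nonneg)
  have upper: "a (m + i) \<le> a m + s i" for i
  proof (induction i)
    case (Suc i)
    then show ?case using up[of "m + i"] by (simp add: s_def)
  qed (simp add: s_def)
  have lower: "a m - s i \<le> a (m + i) \<or> a m \<le> \<eta> + s i" for i
  proof (induction i)
    case (Suc i)
    have "s (Suc i) = s i + e (m + i)" by (simp add: s_def)
    then show ?case using Suc down[of "m + i"] e_nonneg[of "m + i"] by auto
  qed (simp add: s_def)
  show ?thesis
    using upper[of i] lower[of i] S[of i] s_nonneg[of i] a_nonneg[of "m + i"] \<eta>_nonneg
    by (auto simp: s_def abs_le_iff)
qed

lemma uniform_limit_if_bound: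
  fixes f :: "nat \<Rightarrow> 'a \<Rightarrow> real"
  assumes bound: "\<And>m x. N \<le> m \<Longrightarrow> x \<in> S \<Longrightarrow> \<bar>f m x - g x\<bar> \<le> B m" and B: "B \<longlonglongrightarrow> 0"
  shows "uniform_limit S f g sequentially"
proof (rule uniform_limitI)
  fix \<epsilon> :: real assume "0 < \<epsilon>"
  then have "eventually (\<lambda>m. B m < \<epsilon> \<and> N \<le> m) sequentially"
    using order_tendstoD(2)[OF B] eventually_ge_at_top by (intro eventually_conj) auto
  then show "eventually (\<lambda>m. \<forall>x\<in>S. dist (f m x) (g x) < \<epsilon>) sequentially"
    by eventually_elim (use bound in \<open>force simp: dist_real_def\<close>)
qed


lemma tendsto_logplus_divide:
  fixes Q y D :: "nat \<Rightarrow> real"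
  assumes lim: "(\<lambda>n. logplus (Q n) / D n) \<longlonglongrightarrow> L" and small: "(\<lambda>n. ln (y n) / D n) \<longlonglongrightarrow> 0"
    and y_pos: "eventually (\<lambda>n. 0 < y n) sequentially"
    and Q_nonneg: "\<And>n. 0 \<le> Q n" and D_pos: "\<And>n. 0 < D n"
  shows "(\<lambda>n. logplus (Q n / y n) / D n) \<longlonglongrightarrow> L"
proof -
  have "(\<lambda>n. logplus (Q n / y n) / D n - logplus (Q n) / D n) \<longlonglongrightarrow> 0"
  proof (rule Lim_null_comparison)
    show "eventually (\<lambda>n. norm (logplus (Q n / y n) / D n - logplus (Q n) / D n) \<le> \<bar>ln (y n) / D n\<bar>)
        sequentially"
      using y_pos
    proof eventually_elim
      case (elim n)
      have "\<bar>logplus (Q n / y n) - logplus (Q n)\<bar> \<le> \<bar>ln (y n)\<bar>"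
        using Q_nonneg elim by (intro logplus_divide_diff) auto
      then have "\<bar>logplus (Q n / y n) - logplus (Q n)\<bar> / D n \<le> \<bar>ln (y n)\<bar> / D n"
        using D_pos by (intro divide_right_mono) (auto intro: less_imp_le)
      then show ?case
        using D_pos[of n] by (simp add: abs_divide flip: diff_divide_distrib)
    qed
    show "(\<lambda>n. \<bar>ln (y n) / D n\<bar>) \<longlonglongrightarrow> 0" using tendsto_rabs_zero[OF small] .
  qed
  from tendsto_add[OF this lim] show ?thesis by simp
qed


subsection \<open>Circle means of \<open>log \<bar>P\<bar>\<close> for complex polynomials\<close>

lemma has_integral_Re_cis_multiple:
  fixes C :: complex and k :: nat
  assumes k: "1 \<le> k"
  shows "((\<lambda>t. Re (C * cis (real k * t))) has_integral 0) {0..2*pi}"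
proof -
  define g where "g t = (Re C * sin (real k * t) + Im C * cos (real k * t)) / real k" for t
  have "(g has_vector_derivative Re (C * cis (real k * t))) (at t within {0..2*pi})" for t
  proof -
    have "(g has_real_derivative
            (Re C * (cos (real k * t) * real k) + Im C * (- sin (real k * t) * real k)) / real k)
          (at t within {0..2*pi})"
      unfolding g_def using k by (intro derivative_eq_intros) auto
    moreover have "(Re C * (cos (real k * t) * real k) + Im C * (- sin (real k * t) * real k)) / real k
        = Re (C * cis (real k * t))"
      using k by (simp add: field_simps cis.code)
    ultimately show ?thesis by (simp add: has_real_derivative_iff_has_vector_derivative)
  qed
  then have "((\<lambda>t. Re (C * cis (real k * t))) has_integral g (2*pi) - g 0) {0..2*pi}"
    by (intro fundamental_theorem_of_calculus) auto
  moreover have "sin (real k * (2*pi)) = 0" "cos (real k * (2*pi)) = 1"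
    using sin_2npi[of k] cos_2npi[of k] by (simp_all only: mult_ac)
  ultimately show ?thesis by (simp add: g_def)
qed

lemma one_plus_cis_nonzero:
  fixes x :: complex
  assumes "norm x < 1"
  shows "1 + x * cis t \<noteq> 0"
proof
  assume "1 + x * cis t = 0"
  then have "norm (x * cis t) = 1" by (metis add_eq_0_iff norm_minus_cancel norm_one)
  then show False using assms by (simp add: norm_mult)
qed

text \<open>Mean value property of the harmonic function \<open>log \<bar>1 + x s\<bar>\<close> on the unit circle,
  proved by integrating the logarithm series term by term (it converges uniformly).\<close>
lemma integral_ln_norm_one_plus_cis:
  fixes x :: complex
  assumes x: "norm x < 1"
  shows "integral {0..2*pi} (\<lambda>t. ln (norm (1 + x * cis t))) = 0"
proof -
  define c :: "nat \<Rightarrow> complex" where "c n = (-1) ^ Suc n / of_nat n" for n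
  define f where "f n t = Re (c n * (x * cis t) ^ n)" for n t
  have f_eq: "f n t = Re ((c n * x ^ n) * cis (real n * t))" for n t
    unfolding f_def by (simp only: power_mult_distrib Complex.DeMoivre mult.assoc)
  have sums: "(\<lambda>n. f n t) sums ln (norm (1 + x * cis t))" for t
  proof -
    have "norm (x * cis t) < 1" using x by (simp add: norm_mult)
    from Ln_series[OF this] have "(\<lambda>n. c n * (x * cis t) ^ n) sums Ln (1 + x * cis t)"
      by (simp add: c_def)
    then show ?thesis
      using one_plus_cis_nonzero[OF x] by (simp add: sums_complex_iff f_def)
  qed
  have bound: "norm (f n t) \<le> norm x ^ n" for n t
  proof -
    have "norm (c n) \<le> 1" by (cases "n = 0") (auto simp: c_def norm_divide norm_power)
    then have "norm (c n * (x * cis t) ^ n) \<le> norm x ^ n"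
      by (simp add: norm_mult norm_power mult_left_le_one_le)
    then show ?thesis unfolding f_def real_norm_def by (rule order.trans[OF abs_Re_le_cmod])
  qed
  have "uniform_limit {0..2*pi} (\<lambda>n t. \<Sum>i<n. f i t) (\<lambda>t. \<Sum>i. f i t) sequentially"
    by (rule Weierstrass_m_test[OF bound]) (use x in \<open>auto intro: summable_geometric\<close>)
  then have ul: "uniform_limit {0..2*pi} (\<lambda>n t. \<Sum>i<n. f i t)
                   (\<lambda>t. ln (norm (1 + x * cis t))) sequentially"
    by (simp add: sums_unique[OF sums, symmetric])
  have partial: "((\<lambda>t. \<Sum>i<n. f i t) has_integral 0) {0..2*pi}" for n
  proof -
    have "((\<lambda>t. f i t) has_integral 0) {0..2*pi}" for i
    proof (cases "i = 0")
      case False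
      then show ?thesis unfolding f_eq by (intro has_integral_Re_cis_multiple) simp
    qed (simp add: f_def c_def)
    then show ?thesis using has_integral_sum[of "{..<n}" "\<lambda>i t. f i t" "\<lambda>_. 0"] by simp
  qed
  obtain I J where I: "\<And>n. ((\<lambda>t. \<Sum>i<n. f i t) has_integral I n) {0..2*pi}"
    and J: "((\<lambda>t. ln (norm (1 + x * cis t))) has_integral J) {0..2*pi}" and IJ: "I \<longlonglongrightarrow> J"
    by (rule uniform_limit_integral[OF ul]) (auto simp: f_def intro!: continuous_intros)
  have "I = (\<lambda>_. 0)" using I partial by (auto intro: has_integral_unique)
  with IJ have "J = 0" by (simp add: LIMSEQ_const_iff)
  with J show ?thesis by (simp add: integral_unique)
qed

lemma integral_ln_norm_scaled_one_plus_cis: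
  fixes A x :: complex
  assumes "A \<noteq> 0" "norm x < 1"
  shows "integral {0..2*pi} (\<lambda>t. ln (norm (A * (1 + x * cis t)))) = 2 * pi * ln (norm A)"
proof -
  have "continuous_on {0..2*pi} (\<lambda>t. ln (norm (1 + x * cis t)))"
    using one_plus_cis_nonzero[OF assms(2)] by (intro continuous_intros) auto
  then have "integral {0..2*pi} (\<lambda>t. ln (norm A) + ln (norm (1 + x * cis t)))
      = integral {0..2*pi} (\<lambda>t. ln (norm A)) + integral {0..2*pi} (\<lambda>t. ln (norm (1 + x * cis t)))"
    by (intro integral_add integrable_continuous_real) auto
  then show ?thesis
    using assms one_plus_cis_nonzero[OF assms(2)]
    by (simp add: norm_mult ln_mult integral_ln_norm_one_plus_cis)
qed

text \<open>Sub-mean value inequality for \<open>log \<bar>c + s\<bar>\<close> on the circle of radius \<open>r\<close> about \<open>0\<close>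
  (equality when \<open>\<bar>c\<bar> > r\<close>, mean \<open>log r\<close> when \<open>\<bar>c\<bar> < r\<close>).\<close>
lemma submean_ln_norm_linear:
  fixes c :: complex
  assumes r: "0 < r" and c: "c \<noteq> 0" and cr: "norm c \<noteq> r"
  shows "2 * pi * ln (norm c) \<le> integral {0..2*pi} (\<lambda>t. ln (norm (c + of_real r * cis t)))"
proof (cases "r < norm c")
  case True
  have x: "norm (of_real r / c) < 1" using True r by (simp add: norm_divide divide_less_eq)
  have "c + of_real r * cis t = c * (1 + (of_real r / c) * cis t)" for t
    using c by (simp add: field_simps)
  then have "integral {0..2*pi} (\<lambda>t. ln (norm (c + of_real r * cis t))) = 2 * pi * ln (norm c)"
    by (simp only: integral_ln_norm_scaled_one_plus_cis[OF c x])
  then show ?thesis by simp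
next
  case False
  then have small: "norm c < r" using cr by simp
  define y where "y = cnj (c / of_real r)"
  have "norm (c + of_real r * cis t) = norm (of_real r * (1 + y * cis t))" for t
  proof -
    have "c + of_real r * cis t = of_real r * cis t * (1 + (c / of_real r) * cis (- t))"
      using r by (simp add: field_simps cis_mult flip: cis_divide)
    also have "norm \<dots> = norm (of_real r * cnj (1 + (c / of_real r) * cis (- t)))"
      by (simp only: norm_mult complex_mod_cnj) simp
    finally show ?thesis by (simp add: y_def cis_cnj)
  qed
  then have "integral {0..2*pi} (\<lambda>t. ln (norm (c + of_real r * cis t)))
      = integral {0..2*pi} (\<lambda>t. ln (norm (of_real r * (1 + y * cis t))))"
    by presburger
  also have "\<dots> = 2 * pi * ln r"
    using r small by (subst integral_ln_norm_scaled_one_plus_cis) (auto simp: y_def norm_divide)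
  finally have "integral {0..2*pi} (\<lambda>t. ln (norm (c + of_real r * cis t))) = 2 * pi * ln r" .
  moreover have "ln (norm c) \<le> ln r" using small c by (intro ln_mono) auto
  ultimately show ?thesis by simp
qed


text \<open>Sub-mean value inequality for \<open>log \<bar>P\<bar>\<close> on a circle avoiding the zeros of \<open>P\<close>:
  factor \<open>P\<close> into linear factors and apply the previous lemma to each of them.\<close>
lemma submean_ln_norm_poly:
  fixes P :: "complex poly"
  assumes r: "0 < r" and P_s0: "poly P s0 \<noteq> 0"
    and no_root: "\<And>\<rho>. poly P \<rho> = 0 \<Longrightarrow> norm (s0 - \<rho>) \<noteq> r"
  shows "2 * pi * ln (norm (poly P s0))
           \<le> integral {0..2*pi} (\<lambda>t. ln (norm (poly P (s0 + of_real r * cis t))))"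
proof -
  obtain root where dec: "smult (lead_coeff P) (\<Prod>i<degree P. [:- root i, 1:]) = P"
    using complex_poly_decompose' by blast
  define lc where "lc = lead_coeff P"
  define I where "I = {..<degree P}"
  define g where "g i t = ln (norm ((s0 - root i) + of_real r * cis t))" for i t
  have lc: "lc \<noteq> 0" using P_s0 by (auto simp: lc_def)
  have val: "poly P s = lc * (\<Prod>i\<in>I. s - root i)" for s
    by (subst dec[symmetric]) (simp add: poly_prod lc_def I_def)
  have root: "poly P (root i) = 0" if "i \<in> I" for i
    unfolding val using that by (auto simp: I_def prod_zero_iff)
  have ln_val: "ln (norm (poly P s)) = ln (norm lc) + (\<Sum>i\<in>I. ln (norm (s - root i)))"
    if "poly P s \<noteq> 0" for s
  proof -
    have nz: "s - root i \<noteq> 0" if "i \<in> I" for i using \<open>poly P s \<noteq> 0\<close> root[OF that] by auto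
    have "norm (poly P s) = norm lc * (\<Prod>i\<in>I. norm (s - root i))"
      by (simp add: val norm_mult prod_norm)
    moreover have "ln (\<Prod>i\<in>I. norm (s - root i)) = (\<Sum>i\<in>I. ln (norm (s - root i)))"
      using nz by (intro ln_prod) (auto simp: I_def)
    moreover have "0 < (\<Prod>i\<in>I. norm (s - root i))" using nz by (intro prod_pos) auto
    ultimately show ?thesis using lc by (simp add: ln_mult_pos)
  qed
  have on_circle: "poly P (s0 + of_real r * cis t) \<noteq> 0" for t
    using no_root[of "s0 + of_real r * cis t"] r by (auto simp: norm_mult)
  have factor: "(s0 + of_real r * cis t) - root i = (s0 - root i) + of_real r * cis t" for t i
    by simp
  have g_cont: "continuous_on {0..2*pi} (g i)" if "i \<in> I" for i
  proof -
    have "(s0 - root i) + of_real r * cis t \<noteq> 0" for t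
      using on_circle[of t] root[OF that] by (metis factor right_minus_eq)
    then show ?thesis unfolding g_def by (intro continuous_intros) auto
  qed
  have g_mean: "2 * pi * ln (norm (s0 - root i)) \<le> integral {0..2*pi} (g i)" if "i \<in> I" for i
    unfolding g_def using r P_s0 root[OF that] no_root[OF root[OF that]]
    by (intro submean_ln_norm_linear) auto
  have sum_integral: "integral {0..2*pi} (\<lambda>t. \<Sum>i\<in>I. g i t) = (\<Sum>i\<in>I. integral {0..2*pi} (g i))"
    using g_cont by (intro integral_sum integrable_continuous_real) (auto simp: I_def)
  have "integral {0..2*pi} (\<lambda>t. ln (norm (poly P (s0 + of_real r * cis t))))
      = integral {0..2*pi} (\<lambda>t. ln (norm lc) + (\<Sum>i\<in>I. g i t))"
    by (simp only: ln_val[OF on_circle] factor g_def)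
  also have "\<dots> = 2 * pi * ln (norm lc) + (\<Sum>i\<in>I. integral {0..2*pi} (g i))"
    unfolding sum_integral[symmetric]
    using g_cont by (subst integral_add) (auto intro!: integrable_continuous_real continuous_on_sum
        simp: I_def)
  also have "\<dots> \<ge> 2 * pi * ln (norm lc) + (\<Sum>i\<in>I. 2 * pi * ln (norm (s0 - root i)))"
    using g_mean by (intro add_left_mono sum_mono) auto
  finally show ?thesis
    using ln_val[OF P_s0] by (simp add: sum_distrib_left distrib_left)
qed

text \<open>A sub-mean value inequality for a continuous function that holds for all radii but
  finitely many holds for all radii: the circle means depend continuously on the radius.\<close>
lemma submean_except_finite_radii:
  fixes f :: "complex \<Rightarrow> real"
  assumes cont: "continuous_on UNIV f" and r: "0 < r" and fin: "finite B"
    and good: "\<And>r'. 0 < r' \<Longrightarrow> r' \<notin> B \<Longrightarrow> c \<le> integral {0..2*pi} (\<lambda>t. f (s0 + of_real r' * cis t))"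
  shows "c \<le> integral {0..2*pi} (\<lambda>t. f (s0 + of_real r * cis t))"
proof (rule field_le_epsilon)
  fix \<epsilon> :: real assume \<epsilon>: "0 < \<epsilon>"
  define S where "S = cball s0 (r + 1)"
  have "uniformly_continuous_on S f"
    by (rule compact_uniformly_continuous[OF continuous_on_subset[OF cont]]) (auto simp: S_def)
  moreover have "0 < \<epsilon> / (2*pi)" using \<epsilon> by simp
  ultimately obtain \<eta> where \<eta>: "0 < \<eta>"
    and uc: "\<And>x y. x \<in> S \<Longrightarrow> y \<in> S \<Longrightarrow> dist y x < \<eta> \<Longrightarrow> dist (f y) (f x) < \<epsilon> / (2*pi)"
    unfolding uniformly_continuous_on_def by metis
  define h where "h = min \<eta> 1"
  have "infinite {r<..<r + h}" using \<eta> by (intro infinite_Ioo) (auto simp: h_def)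
  then obtain r' where "r' \<in> {r<..<r + h}" "r' \<notin> B" using fin finite_subset by (metis subsetI)
  then have r': "r < r'" "r' < r + h" "r' \<notin> B" by auto
  have cf: "continuous_on {0..2*pi} (\<lambda>t. f (s0 + of_real \<rho> * cis t))" for \<rho>
    by (intro continuous_on_compose2[OF cont] continuous_intros) auto
  have close: "f (s0 + of_real r' * cis t) - \<epsilon> / (2*pi) \<le> f (s0 + of_real r * cis t)" for t
  proof -
    have "s0 + of_real r * cis t \<in> S" "s0 + of_real r' * cis t \<in> S"
      using r r' by (auto simp: S_def dist_norm norm_mult h_def)
    moreover have "dist (s0 + of_real r' * cis t) (s0 + of_real r * cis t) < \<eta>"
      using r' r by (simp add: dist_norm norm_mult h_def
          flip: left_diff_distrib of_real_diff)
    ultimately have "dist (f (s0 + of_real r' * cis t)) (f (s0 + of_real r * cis t)) < \<epsilon> / (2*pi)"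
      by (rule uc)
    then show ?thesis by (simp add: dist_real_def abs_less_iff)
  qed
  have "c \<le> integral {0..2*pi} (\<lambda>t. f (s0 + of_real r' * cis t))" using r r' by (intro good) auto
  also have "\<dots> - \<epsilon> = integral {0..2*pi} (\<lambda>t. f (s0 + of_real r' * cis t) - \<epsilon> / (2*pi))"
    by (subst integral_diff) (auto intro: integrable_continuous_real cf)
  also have "\<dots> \<le> integral {0..2*pi} (\<lambda>t. f (s0 + of_real r * cis t))"
    by (intro integral_le integrable_diff integrable_continuous_real cf close) auto
  finally show "c \<le> integral {0..2*pi} (\<lambda>t. f (s0 + of_real r * cis t)) + \<epsilon>" by linarith
qed

lemma submean_logplus_poly:
  fixes P :: "complex poly"
  assumes r: "0 < r"
  shows "2 * pi * logplus (norm (poly P s0))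
           \<le> integral {0..2*pi} (\<lambda>t. logplus (norm (poly P (s0 + of_real r * cis t))))"
proof (cases "1 < norm (poly P s0)")
  case False
  have "continuous_on {0..2*pi} (\<lambda>t. logplus (norm (poly P (s0 + of_real r * cis t))))"
    unfolding logplus_eq_ln_max by (intro continuous_intros) auto
  then have "0 \<le> integral {0..2*pi} (\<lambda>t. logplus (norm (poly P (s0 + of_real r * cis t))))"
    by (intro integral_nonneg integrable_continuous_real) (auto simp: logplus_nonneg)
  then show ?thesis using False by (simp add: logplus_def)
next
  case True
  then have P: "P \<noteq> 0" by auto
  show ?thesis
  proof (rule submean_except_finite_radii[OF _ r])
    show "continuous_on UNIV (\<lambda>s. logplus (norm (poly P s)))"
      unfolding logplus_eq_ln_max by (intro continuous_intros) auto
    show "finite ((\<lambda>\<rho>. norm (s0 - \<rho>)) ` {\<rho>. poly P \<rho> = 0})"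
      using poly_roots_finite[OF P] by simp
  next
    fix r' :: real
    assume r': "0 < r'" "r' \<notin> (\<lambda>\<rho>. norm (s0 - \<rho>)) ` {\<rho>. poly P \<rho> = 0}"
    have on_circle: "poly P (s0 + of_real r' * cis t) \<noteq> 0" for t
    proof
      assume "poly P (s0 + of_real r' * cis t) = 0"
      moreover have "norm (s0 - (s0 + of_real r' * cis t)) = r'" using r' by (simp add: norm_mult)
      ultimately show False using r'(2) by force
    qed
    have "continuous_on {0..2*pi} (\<lambda>t. ln (norm (poly P (s0 + of_real r' * cis t))))"
      using on_circle by (intro continuous_intros) auto
    moreover have "continuous_on {0..2*pi} (\<lambda>t. logplus (norm (poly P (s0 + of_real r' * cis t))))"
      unfolding logplus_eq_ln_max by (intro continuous_intros) auto
    ultimately have "integral {0..2*pi} (\<lambda>t. ln (norm (poly P (s0 + of_real r' * cis t))))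
        \<le> integral {0..2*pi} (\<lambda>t. logplus (norm (poly P (s0 + of_real r' * cis t))))"
      using on_circle by (intro integral_le integrable_continuous_real ln_le_logplus) auto
    moreover have "2 * pi * ln (norm (poly P s0))
        \<le> integral {0..2*pi} (\<lambda>t. ln (norm (poly P (s0 + of_real r' * cis t))))"
      using r' True by (intro submean_ln_norm_poly) force+
    ultimately show "2 * pi * logplus (norm (poly P s0))
        \<le> integral {0..2*pi} (\<lambda>t. logplus (norm (poly P (s0 + of_real r' * cis t))))"
      using True by (simp add: logplus_eq_ln)
  qed
qed


subsection \<open>A criterion for plurisubharmonicity\<close>

lemma usc_on_if_continuous_on: "continuous_on S f \<Longrightarrow> usc_on S f"
  unfolding usc_on_def continuous_on_def using order_tendstoD(2) by blast

lemma submean_uniform_limit: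
  fixes f :: "nat \<Rightarrow> complex \<Rightarrow> real"
  assumes ul: "uniform_limit (cball s0 r) f u sequentially"
    and cont: "\<And>m. continuous_on (cball s0 r) (f m)" and r: "0 \<le> r"
    and sub: "\<And>m. 2 * pi * f m s0 \<le> integral {0..2*pi} (\<lambda>t. f m (s0 + of_real r * cis t))"
  shows "2 * pi * u s0 \<le> integral {0..2*pi} (\<lambda>t. u (s0 + of_real r * cis t))"
proof -
  have circle: "(\<lambda>t. s0 + of_real r * cis t) \<in> {0..2*pi} \<rightarrow> cball s0 r"
    using r by (auto simp: dist_norm norm_mult)
  have "uniform_limit {0..2*pi} (\<lambda>m t. f m (s0 + of_real r * cis t))
          (\<lambda>t. u (s0 + of_real r * cis t)) sequentially"
    by (rule uniform_limit_compose'[OF ul circle])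
  moreover have "continuous_on {0..2*pi} (\<lambda>t. f m (s0 + of_real r * cis t))" for m
    using circle by (intro continuous_on_compose2[OF cont] continuous_intros) auto
  ultimately obtain I J where I: "\<And>m. ((\<lambda>t. f m (s0 + of_real r * cis t)) has_integral I m) {0..2*pi}"
    and J: "((\<lambda>t. u (s0 + of_real r * cis t)) has_integral J) {0..2*pi}" and IJ: "I \<longlonglongrightarrow> J"
    by (rule uniform_limit_integral) auto
  have center: "(\<lambda>m. 2 * pi * f m s0) \<longlonglongrightarrow> 2 * pi * u s0"
    using r by (intro tendsto_mult_left tendsto_uniform_limitI[OF ul]) auto
  have "2 * pi * f m s0 \<le> I m" for m using sub[of m] I[of m] by (simp add: integral_unique)
  then have "2 * pi * u s0 \<le> J" by (intro tendsto_le[OF _ IJ center] always_eventually) auto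
  then show ?thesis using J by (simp add: integral_unique)
qed

lemma subharmonic_on_if_locally_uniform_limit:
  fixes f :: "nat \<Rightarrow> complex \<Rightarrow> real" and u :: "complex \<Rightarrow> real"
  assumes u_cont: "continuous_on D u" and f_cont: "\<And>m. continuous_on UNIV (f m)"
    and f_submean: "\<And>m s r. 0 < r \<Longrightarrow>
          2 * pi * f m s \<le> integral {0..2*pi} (\<lambda>t. f m (s + of_real r * cis t))"
    and local_unif: "\<And>s. s \<in> D \<Longrightarrow>
          \<exists>\<epsilon>>0. ball s \<epsilon> \<subseteq> D \<and> uniform_limit (ball s \<epsilon>) f u sequentially"
  shows "subharmonic_on D u"
  unfolding subharmonic_on_def
proof (intro conjI ballI usc_on_if_continuous_on[OF u_cont])
  fix s0 assume "s0 \<in> D"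
  then obtain \<epsilon> where \<epsilon>: "0 < \<epsilon>" "ball s0 \<epsilon> \<subseteq> D"
    and ul: "uniform_limit (ball s0 \<epsilon>) f u sequentially"
    using local_unif by blast
  show "\<exists>r0>0. \<forall>r. 0 < r \<and> r < r0 \<longrightarrow>
      set_integrable lborel {0..2*pi} (\<lambda>t. u (s0 + of_real r * cis t)) \<and>
      u s0 \<le> 1 / (2*pi) * (LINT t:{0..2*pi}|lborel. u (s0 + of_real r * cis t))"
  proof (intro exI[of _ \<epsilon>] conjI allI impI \<epsilon>(1))
    fix r assume r: "0 < r \<and> r < \<epsilon>"
    then have cball: "cball s0 r \<subseteq> ball s0 \<epsilon>" by auto
    have "s0 + of_real r * cis t \<in> cball s0 r" for t using r by (simp add: dist_norm norm_mult)
    then have "s0 + of_real r * cis t \<in> D" for t using cball \<epsilon>(2) by blast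
    then have circle_cont: "continuous_on {0..2*pi} (\<lambda>t. u (s0 + of_real r * cis t))"
      by (intro continuous_on_compose2[OF u_cont] continuous_intros) auto
    then show "set_integrable lborel {0..2*pi} (\<lambda>t. u (s0 + of_real r * cis t))"
      by (rule borel_integrable_atLeastAtMost')
    have "2 * pi * u s0 \<le> integral {0..2*pi} (\<lambda>t. u (s0 + of_real r * cis t))"
      using r by (intro submean_uniform_limit[OF uniform_limit_on_subset[OF ul cball]] f_submean
          continuous_on_subset[OF f_cont]) auto
    moreover have "(LINT t:{0..2*pi}|lborel. u (s0 + of_real r * cis t))
        = integral {0..2*pi} (\<lambda>t. u (s0 + of_real r * cis t))"
      by (rule set_borel_integral_eq_integral(2)[OF borel_integrable_atLeastAtMost'[OF circle_cont]])
    ultimately show "u s0 \<le> 1 / (2*pi) * (LINT t:{0..2*pi}|lborel. u (s0 + of_real r * cis t))"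
      by (simp add: field_simps)
  qed
qed

lemma plurisubharmonic_on_if_locally_uniform_limit:
  fixes F :: "nat \<Rightarrow> complex \<times> complex \<Rightarrow> real" and u :: "complex \<times> complex \<Rightarrow> real"
  assumes \<Omega>: "open \<Omega>" and u_cont: "continuous_on \<Omega> u"
    and F_cont: "\<And>m. continuous_on UNIV (F m)"
    and F_submean: "\<And>m a b s r. 0 < r \<Longrightarrow>
          2 * pi * F m (a + (s * fst b, s * snd b))
            \<le> integral {0..2*pi} (\<lambda>t. F m (a + ((s + of_real r * cis t) * fst b,
                                              (s + of_real r * cis t) * snd b)))"
    and local_unif: "\<And>x. x \<in> \<Omega> \<Longrightarrow>
          \<exists>V. open V \<and> x \<in> V \<and> V \<subseteq> \<Omega> \<and> uniform_limit V F u sequentially"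
  shows "plurisubharmonic_on \<Omega> u"
  unfolding plurisubharmonic_on_def
proof (intro conjI ballI allI \<Omega> usc_on_if_continuous_on[OF u_cont])
  fix a b :: "complex \<times> complex"
  define L where "L s = a + (s * fst b, s * snd b)" for s
  define D where "D = {s. L s \<in> \<Omega>}"
  have L_cont: "continuous_on A L" for A unfolding L_def by (intro continuous_intros)
  have "subharmonic_on D (\<lambda>s. u (L s))"
  proof (rule subharmonic_on_if_locally_uniform_limit[where f = "\<lambda>m s. F m (L s)"])
    show "continuous_on D (\<lambda>s. u (L s))"
      by (rule continuous_on_compose2[OF u_cont L_cont]) (auto simp: D_def)
    show "continuous_on UNIV (\<lambda>s. F m (L s))" for m
      by (rule continuous_on_compose2[OF F_cont L_cont]) auto
    show "2 * pi * F m (L s) \<le> integral {0..2*pi} (\<lambda>t. F m (L (s + of_real r * cis t)))"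
      if "0 < r" for m s r
      unfolding L_def using that by (rule F_submean)
  next
    fix s0 assume "s0 \<in> D"
    then have "L s0 \<in> \<Omega>" by (simp add: D_def)
    then obtain V where V: "open V" "L s0 \<in> V" "V \<subseteq> \<Omega>" and ul: "uniform_limit V F u sequentially"
      using local_unif by blast
    have "open (L -` V)" using V(1) L_cont[of UNIV] by (rule open_vimage)
    then obtain \<epsilon> where \<epsilon>: "0 < \<epsilon>" "ball s0 \<epsilon> \<subseteq> L -` V"
      using V(2) open_contains_ball by blast
    then show "\<exists>\<epsilon>>0. ball s0 \<epsilon> \<subseteq> D \<and>
        uniform_limit (ball s0 \<epsilon>) (\<lambda>m s. F m (L s)) (\<lambda>s. u (L s)) sequentially"
      using V(3) by (intro exI[of _ \<epsilon>] conjI uniform_limit_compose'[OF ul]) (auto simp: D_def)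
  qed
  then show "subharmonic_on {s. a + (s * fst b, s * snd b) \<in> \<Omega>} (\<lambda>s. u (a + (s * fst b, s * snd b)))"
    by (simp add: D_def L_def)
qed

text \<open>Functions \<open>\<complex> \<rightarrow> \<complex>\<close> given by a polynomial; iterates of \<open>f\<close> restricted to complex lines are
  of this form, which gives them the sub-mean value property.\<close>
definition is_poly_fun :: "(complex \<Rightarrow> complex) \<Rightarrow> bool" where
  "is_poly_fun f \<longleftrightarrow> (\<exists>P. \<forall>s. f s = poly P s)"

lemma is_poly_fun_const: "is_poly_fun (\<lambda>s. c)"
  unfolding is_poly_fun_def by (intro exI[of _ "[:c:]"]) simp

lemma is_poly_fun_affine: "is_poly_fun (\<lambda>s. a + s * b)"
  unfolding is_poly_fun_def by (intro exI[of _ "[:a, b:]"]) (simp add: mult.commute)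

lemma is_poly_fun_add: "is_poly_fun f \<Longrightarrow> is_poly_fun g \<Longrightarrow> is_poly_fun (\<lambda>s. f s + g s)"
  unfolding is_poly_fun_def by (metis poly_add)

lemma is_poly_fun_mult: "is_poly_fun f \<Longrightarrow> is_poly_fun g \<Longrightarrow> is_poly_fun (\<lambda>s. f s * g s)"
  unfolding is_poly_fun_def by (metis poly_mult)

lemma is_poly_fun_power: "is_poly_fun f \<Longrightarrow> is_poly_fun (\<lambda>s. f s ^ n)"
  by (induction n) (auto intro: is_poly_fun_mult is_poly_fun_const)

lemma is_poly_fun_compose: "is_poly_fun f \<Longrightarrow> is_poly_fun (\<lambda>s. poly Q (f s))"
  unfolding is_poly_fun_def by (metis poly_pcompose)

lemma is_poly_fun_sum:
  "finite I \<Longrightarrow> (\<And>i. i \<in> I \<Longrightarrow> is_poly_fun (f i)) \<Longrightarrow> is_poly_fun (\<lambda>s. \<Sum>i\<in>I. f i s)"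
  by (induction I rule: finite_induct) (auto intro: is_poly_fun_add is_poly_fun_const)


section \<open>The Green function of the skew product \<open>f(z, w) = (p(z), q(z, w))\<close>\<close>

locale skew_product =
  fixes p :: "complex poly" and q :: "complex poly poly" and \<delta> d \<gamma> :: nat
  assumes p_monic: "lead_coeff p = 1" and p_deg: "degree p = \<delta>" and \<delta>_ge: "\<delta> \<ge> 2"
    and q_deg: "degree q = d" and d_ge: "d \<ge> 2"
    and b_monic: "lead_coeff (lead_coeff q) = 1" and b_deg: "degree (lead_coeff q) = \<gamma>"
    and \<delta>_lt: "\<delta> < d" and \<gamma>_ge: "\<gamma> \<ge> 1"
begin

abbreviation orbit :: "nat \<Rightarrow> complex \<Rightarrow> complex" where
  "orbit n z \<equiv> (poly p ^^ n) z"

abbreviation \<alpha> :: real where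
  "\<alpha> \<equiv> alpha_exp p q"

text \<open>Constants of the crude growth estimates: \<open>log\<^sup>+ \<bar>p(x)\<bar> \<le> Cp + \<delta> log\<^sup>+ \<bar>x\<bar>\<close> and
  \<open>log\<^sup>+ \<bar>q(z, w)\<bar> \<le> Cq + E log\<^sup>+ \<bar>z\<bar> + d log\<^sup>+ \<bar>w\<bar>\<close>.\<close>
definition Cp :: real where "Cp = logplus (\<Sum>i\<le>degree p. norm (coeff p i))"
definition Cq :: real where "Cq = logplus (qcoeff_sum q)"
definition E :: real where "E = real (qdeg_sum q)"

text \<open>\<open>K z\<close> controls the growth of the orbit of \<open>z\<close>: \<open>log\<^sup>+ \<bar>p\<^sup>n(z)\<bar> \<le> \<delta>\<^sup>n K z\<close>.\<close>
definition K :: "complex \<Rightarrow> real" where "K z = logplus (norm z) + Cp"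

definition F :: "nat \<Rightarrow> complex \<Rightarrow> complex \<Rightarrow> real" where
  "F n z w = logplus (norm (Qit p q n z w)) / real d ^ n"

definition G :: "complex \<Rightarrow> complex \<Rightarrow> real" where
  "G z w = lim (\<lambda>n. F n z w)"

text \<open>Bound on the increase \<open>F (n+1) - F n\<close>; it is summable because \<open>\<delta> < d\<close>.\<close>
definition step_err :: "real \<Rightarrow> real \<Rightarrow> nat \<Rightarrow> real" where
  "step_err c k n = (c + E * k * real \<delta> ^ n) / real d ^ Suc n"

lemma Cp_nonneg: "0 \<le> Cp" and Cq_nonneg: "0 \<le> Cq" and E_nonneg: "0 \<le> E" and K_nonneg: "0 \<le> K z"
  by (auto simp: Cp_def Cq_def E_def K_def logplus_nonneg)

lemma d_gt_1: "1 < real d"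
  using d_ge by simp

lemma F_nonneg: "0 \<le> F n z w"
  unfolding F_def by (simp add: logplus_nonneg)

lemma orbit_growth: "logplus (norm (orbit n z)) + Cp \<le> real \<delta> ^ n * K z"
proof (induction n)
  case (Suc n)
  have "logplus (norm (orbit (Suc n) z)) + Cp \<le> 2 * Cp + real \<delta> * logplus (norm (orbit n z))"
    using logplus_norm_poly_le[of p "orbit n z"] by (simp add: Cp_def p_deg)
  also have "\<dots> \<le> real \<delta> * (logplus (norm (orbit n z)) + Cp)"
    using mult_right_mono[of 2 "real \<delta>" Cp] \<delta>_ge Cp_nonneg by (simp add: algebra_simps)
  also have "\<dots> \<le> real \<delta> * (real \<delta> ^ n * K z)"
    using Suc by (intro mult_left_mono) auto
  finally show ?case by simp
qed (simp add: K_def)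

lemma orbit_logplus_le: "logplus (norm (orbit n z)) \<le> real \<delta> ^ n * K z"
  using orbit_growth[of n z] Cp_nonneg by linarith

lemma F_Suc_le:
  assumes "Cq \<le> c" "K z \<le> k"
  shows "F (Suc n) z w \<le> F n z w + step_err c k n"
proof -
  have "logplus (norm (Qit p q (Suc n) z w))
      \<le> Cq + E * logplus (norm (orbit n z)) + real d * logplus (norm (Qit p q n z w))"
    using logplus_norm_evalq_le[of q "orbit n z" "Qit p q n z w"] by (simp add: Cq_def E_def q_deg)
  also have "E * logplus (norm (orbit n z)) \<le> E * k * real \<delta> ^ n"
    using orbit_logplus_le[of n z] assms(2) E_nonneg
    by (metis mult.assoc mult.commute mult_left_mono order.trans of_nat_0_le_iff zero_le_power)
  finally have "logplus (norm (Qit p q (Suc n) z w))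
      \<le> (c + E * k * real \<delta> ^ n) + real d * logplus (norm (Qit p q n z w))"
    using assms(1) by linarith
  then have "F (Suc n) z w
      \<le> (c + E * k * real \<delta> ^ n + real d * logplus (norm (Qit p q n z w))) / real d ^ Suc n"
    unfolding F_def using d_gt_1 by (intro divide_right_mono) auto
  also have "\<dots> = F n z w + step_err c k n"
    using d_gt_1 by (simp add: F_def step_err_def field_simps)
  finally show ?thesis .
qed

lemma step_err_nonneg: "0 \<le> c \<Longrightarrow> 0 \<le> k \<Longrightarrow> 0 \<le> step_err c k n"
  unfolding step_err_def using E_nonneg by (intro divide_nonneg_nonneg add_nonneg_nonneg) auto

lemma summable_step_err: "summable (step_err c k)"
proof -
  have "step_err c k = (\<lambda>n. c / real d * (1 / real d) ^ n + E * k / real d * (real \<delta> / real d) ^ n)"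
    by (auto simp: step_err_def fun_eq_iff power_divide add_divide_distrib)
  moreover have "summable (\<lambda>n. c / real d * (1 / real d) ^ n + E * k / real d * (real \<delta> / real d) ^ n)"
    using d_gt_1 \<delta>_lt by (intro summable_add summable_mult summable_geometric) auto
  ultimately show ?thesis by simp
qed

lemma F_tendsto_G: "(\<lambda>n. F n z w) \<longlonglongrightarrow> G z w"
proof -
  have "convergent (\<lambda>n. F n z w)"
    using F_Suc_le[OF order.refl order.refl] Cq_nonneg K_nonneg
    by (intro convergent_if_almost_decreasing[OF _ step_err_nonneg summable_step_err] F_nonneg)
  then show ?thesis unfolding G_def by (simp add: convergent_LIMSEQ_iff)
qed

lemma G_nonneg: "0 \<le> G z w"
  by (rule LIMSEQ_le_const[OF F_tendsto_G]) (auto simp: F_nonneg)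

lemma orbit_logplus_ratio_tendsto_0: "(\<lambda>n. logplus (norm (orbit n z)) / real d ^ n) \<longlonglongrightarrow> 0"
proof (rule tendsto_sandwich[of "\<lambda>_. 0" _ _ "\<lambda>n. K z * (real \<delta> / real d) ^ n"])
  show "\<forall>\<^sub>F n in sequentially. logplus (norm (orbit n z)) / real d ^ n \<le> K z * (real \<delta> / real d) ^ n"
    using orbit_logplus_le d_gt_1
    by (intro always_eventually allI) (simp add: power_divide divide_right_mono mult.commute)
  show "(\<lambda>n. K z * (real \<delta> / real d) ^ n) \<longlonglongrightarrow> 0"
    using tendsto_mult_left[OF LIMSEQ_power_zero[of "real \<delta> / real d"], of "K z"] d_gt_1 \<delta>_lt
    by simp
qed (auto simp: logplus_nonneg)


subsection \<open>The escape set of \<open>p\<close>\<close>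

lemma escape_radius:
  obtains R where "1 \<le> R" "\<And>x. R \<le> norm x \<Longrightarrow> 2 * norm x \<le> norm (poly p x)"
proof
  define S where "S = (\<Sum>i<\<delta>. norm (coeff p i))"
  have S: "0 \<le> S" by (simp add: S_def sum_nonneg)
  show "1 \<le> S + 2" using S by simp
  fix x :: complex assume x: "S + 2 \<le> norm x"
  then have "norm x * 2 \<le> norm x ^ (\<delta> - 1) * (norm x - S)"
    using S \<delta>_ge by (intro mult_mono self_le_power) auto
  also have "\<dots> \<le> norm (poly p x)"
    using norm_poly_monic_ge[OF p_monic p_deg] x S \<delta>_ge by (simp add: S_def)
  finally show "2 * norm x \<le> norm (poly p x)" by simp
qed

lemma orbit_doubling:
  assumes R: "1 \<le> R" "\<And>x. R \<le> norm x \<Longrightarrow> 2 * norm x \<le> norm (poly p x)"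
    and N: "R \<le> norm (orbit N z)"
  shows "2 ^ j * R \<le> norm (orbit (j + N) z)"
proof (induction j)
  case (Suc j)
  have "R \<le> 2 ^ j * R" using R(1) by simp
  then have "R \<le> norm (orbit (j + N) z)" using Suc by linarith
  then have "2 * norm (orbit (j + N) z) \<le> norm (orbit (Suc j + N) z)" by (simp add: R(2))
  then show ?case using Suc by simp
qed (simp add: N)

lemma orbit_stays_beyond:
  assumes R: "1 \<le> R" "\<And>x. R \<le> norm x \<Longrightarrow> 2 * norm x \<le> norm (poly p x)"
    and N: "R \<le> norm (orbit N z)" and j: "N \<le> j"
  shows "R \<le> norm (orbit j z)"
proof -
  have "R \<le> 2 ^ (j - N) * R" using R(1) by simp
  also have "\<dots> \<le> norm (orbit j z)" using orbit_doubling[OF R N, of "j - N"] j by simp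
  finally show ?thesis .
qed

lemma escape_set_iff:
  assumes R: "1 \<le> R" "\<And>x. R \<le> norm x \<Longrightarrow> 2 * norm x \<le> norm (poly p x)"
  shows "z \<in> escape_set p \<longleftrightarrow> (\<exists>N. R < norm (orbit N z))"
proof
  assume "z \<in> escape_set p"
  then have "filterlim (\<lambda>n. norm (orbit n z)) at_top sequentially"
    by (simp add: escape_set_def filterlim_at_infinity_imp_norm_at_top)
  then have "eventually (\<lambda>n. R + 1 \<le> norm (orbit n z)) sequentially"
    by (simp add: filterlim_at_top)
  then obtain N where "R + 1 \<le> norm (orbit N z)" by (auto simp: eventually_sequentially)
  then show "\<exists>N. R < norm (orbit N z)" by (intro exI[of _ N]) simp
next
  assume "\<exists>N. R < norm (orbit N z)"
  then obtain N where N: "R \<le> norm (orbit N z)" using less_imp_le by blast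
  have "filterlim (\<lambda>n. norm (orbit n z)) at_top sequentially"
    unfolding filterlim_at_top eventually_sequentially
  proof
    fix Z :: real
    obtain j where j: "Z < 2 ^ j" using real_arch_pow[of 2 Z] by auto
    have "Z \<le> norm (orbit n z)" if "j + N \<le> n" for n
    proof -
      have "(2::real) ^ j * 1 \<le> 2 ^ (n - N) * R"
        using that R(1) by (intro mult_mono power_increasing) auto
      also have "\<dots> \<le> norm (orbit n z)"
        using orbit_doubling[OF R N, of "n - N"] that by simp
      finally show ?thesis using j by simp
    qed
    then show "\<exists>M. \<forall>n\<ge>M. Z \<le> norm (orbit n z)" by blast
  qed
  then show "z \<in> escape_set p"
    by (simp add: escape_set_def filterlim_norm_at_top_imp_at_infinity)
qed

lemma continuous_on_orbit: "continuous_on S f \<Longrightarrow> continuous_on S (\<lambda>x. orbit n (f x))"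
  by (induction n) (auto intro!: continuous_intros)

lemma open_escape_set: "open (escape_set p)"
proof -
  obtain R where R: "1 \<le> R" "\<And>x. R \<le> norm x \<Longrightarrow> 2 * norm x \<le> norm (poly p x)"
    using escape_radius by blast
  have "escape_set p = (\<Union>N. {z. R < norm (orbit N z)})" using escape_set_iff[OF R] by auto
  also have "open \<dots>"
    by (intro open_UN ballI open_Collect_less continuous_intros continuous_on_orbit)
  finally show ?thesis .
qed

subsection \<open>The region where \<open>q\<close> is dominated by its leading term\<close>

lemma monomial_exponent_le_alpha:
  assumes coeff: "coeff (coeff q m) n \<noteq> 0" and m: "m < d"
  shows "real n \<le> real \<gamma> + \<alpha> * (real d - real m)"
proof -
  have b_deg': "degree (coeff q d) = \<gamma>" using b_deg q_deg by simp
  let ?e = "\<lambda>(n, m). (real n - real \<gamma>) / (real d - real m)"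
  let ?S = "{(real n - real (degree (lead_coeff q))) / (real (degree q) - real m) | n m.
              coeff (coeff q m) n \<noteq> 0 \<and> m < degree q}"
  have "?S \<subseteq> ?e ` ({..qdeg_sum q} \<times> {..<d})"
  proof
    fix x assume "x \<in> ?S"
    then obtain n m where x: "x = ?e (n, m)" and c: "coeff (coeff q m) n \<noteq> 0" and "m < d"
      by (auto simp: b_deg' q_deg)
    moreover have "n \<le> qdeg_sum q"
      using le_degree[OF c] degree_coeff_le_qdeg_sum[of m q] \<open>m < d\<close> q_deg by simp
    ultimately show "x \<in> ?e ` ({..qdeg_sum q} \<times> {..<d})" by force
  qed
  then have "finite ?S" by (rule finite_subset) auto
  moreover have "?e (n, m) \<in> ?S" using coeff m by (auto simp: b_deg' q_deg)
  ultimately have "?e (n, m) \<le> \<alpha>"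
    unfolding alpha_exp_def by (intro Max_ge) auto
  then show ?thesis using m by (simp add: field_simps)
qed

lemma lead_coeff_q_ge:
  obtains R where "1 \<le> R" "\<And>z. R \<le> norm z \<Longrightarrow> norm z ^ \<gamma> / 2 \<le> norm (poly (lead_coeff q) z)"
proof
  define S where "S = (\<Sum>i<\<gamma>. norm (coeff (lead_coeff q) i))"
  have S: "0 \<le> S" by (simp add: S_def sum_nonneg)
  show "1 \<le> 2 * S + 1" using S by simp
  fix z :: complex assume z: "2 * S + 1 \<le> norm z"
  have "norm z ^ \<gamma> = norm z ^ (\<gamma> - 1) * norm z"
    using \<gamma>_ge by (metis Suc_diff_le diff_Suc_1 power_Suc2 One_nat_def)
  moreover have "S * norm z ^ (\<gamma> - 1) \<le> (norm z / 2) * norm z ^ (\<gamma> - 1)"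
    using z by (intro mult_right_mono) auto
  ultimately have "norm z ^ \<gamma> / 2 \<le> norm z ^ (\<gamma> - 1) * (norm z - S)"
    by (simp add: algebra_simps)
  also have "\<dots> \<le> norm (poly (lead_coeff q) z)"
    using norm_poly_monic_ge[OF b_monic b_deg \<gamma>_ge] z S by (simp add: S_def)
  finally show "norm z ^ \<gamma> / 2 \<le> norm (poly (lead_coeff q) z)" .
qed

lemma lower_terms_le:
  assumes z: "1 \<le> norm z" and R: "1 \<le> R" and w: "R * norm z powr \<alpha> \<le> norm w"
  shows "norm (\<Sum>m<d. poly (coeff q m) z * w ^ m)
           \<le> (\<Sum>m<d. \<Sum>n\<le>qdeg_sum q. norm (coeff (coeff q m) n)) / R * (norm z ^ \<gamma> * norm w ^ d)"
proof -
  let ?c = "\<lambda>m n. norm (coeff (coeff q m) n)"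
  have monomial: "?c m n * (norm z ^ n * norm w ^ m) \<le> ?c m n * (norm z ^ \<gamma> * norm w ^ d / R)"
    if m: "m < d" for m n
  proof (cases "coeff (coeff q m) n = 0")
    case False
    have "norm z ^ n * norm w ^ m \<le> norm z powr real \<gamma> * norm w ^ d / R"
      using monomial_exponent_le_alpha[OF False m]
      by (intro monomial_le_in_region[OF z R w m]) simp
    moreover have "norm z powr real \<gamma> = norm z ^ \<gamma>" using z by (intro powr_realpow) linarith
    ultimately show ?thesis by (intro mult_left_mono) auto
  qed simp
  have "norm (\<Sum>m<d. poly (coeff q m) z * w ^ m) \<le> (\<Sum>m<d. norm (poly (coeff q m) z) * norm w ^ m)"
    by (rule order.trans[OF norm_sum]) (simp add: norm_mult norm_power)
  also have "\<dots> \<le> (\<Sum>m<d. \<Sum>n\<le>qdeg_sum q. ?c m n * (norm z ^ n * norm w ^ m))"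
  proof (intro sum_mono)
    fix m assume "m \<in> {..<d}"
    then have "degree (coeff q m) \<le> qdeg_sum q" using q_deg by (intro degree_coeff_le_qdeg_sum) auto
    then have "norm (poly (coeff q m) z) \<le> (\<Sum>n\<le>qdeg_sum q. ?c m n * norm z ^ n)"
      by (simp add: poly_eq_sum_upto norm_sum order.trans[OF norm_sum] norm_mult norm_power)
    then have "norm (poly (coeff q m) z) * norm w ^ m \<le> (\<Sum>n\<le>qdeg_sum q. ?c m n * norm z ^ n) * norm w ^ m"
      by (rule mult_right_mono) simp
    then show "norm (poly (coeff q m) z) * norm w ^ m \<le> (\<Sum>n\<le>qdeg_sum q. ?c m n * (norm z ^ n * norm w ^ m))"
      by (simp add: sum_distrib_right mult.assoc)
  qed
  also have "\<dots> \<le> (\<Sum>m<d. \<Sum>n\<le>qdeg_sum q. ?c m n * (norm z ^ \<gamma> * norm w ^ d / R))"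
    by (intro sum_mono monomial) auto
  also have "\<dots> = (\<Sum>m<d. \<Sum>n\<le>qdeg_sum q. ?c m n) / R * (norm z ^ \<gamma> * norm w ^ d)"
    by (simp add: sum_distrib_right sum_divide_distrib mult.assoc)
  finally show ?thesis .
qed

lemma dominant_region:
  obtains R0 R where "1 \<le> R0" "1 \<le> R"
    "\<And>z w. R0 \<le> norm z \<Longrightarrow> R * norm z powr \<alpha> \<le> norm w \<Longrightarrow> norm w ^ d / 4 \<le> norm (evalq q z w)"
proof -
  obtain R0 where R0: "1 \<le> R0" "\<And>z. R0 \<le> norm z \<Longrightarrow> norm z ^ \<gamma> / 2 \<le> norm (poly (lead_coeff q) z)"
    using lead_coeff_q_ge by blast
  define S where "S = (\<Sum>m<d. \<Sum>n\<le>qdeg_sum q. norm (coeff (coeff q m) n))"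
  have S: "0 \<le> S" unfolding S_def by (intro sum_nonneg) auto
  show ?thesis
  proof (rule that[OF R0(1)])
    show R: "1 \<le> 4 * S + 1" using S by simp
    fix z w :: complex assume z: "R0 \<le> norm z" and w: "(4 * S + 1) * norm z powr \<alpha> \<le> norm w"
    define X where "X = norm z ^ \<gamma> * norm w ^ d"
    have "norm (\<Sum>m<d. poly (coeff q m) z * w ^ m) \<le> S / (4 * S + 1) * X"
      using lower_terms_le[OF _ R w] z R0(1) by (simp add: S_def X_def)
    also have "\<dots> \<le> 1 / 4 * X"
      using S by (intro mult_right_mono) (auto simp: X_def field_simps)
    finally have lower: "norm (\<Sum>m<d. poly (coeff q m) z * w ^ m) \<le> X / 4" by simp
    have "norm z ^ \<gamma> / 2 * norm w ^ d \<le> norm (poly (lead_coeff q) z) * norm w ^ d"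
      using R0(2)[OF z] by (intro mult_right_mono) auto
    then have lead: "X / 2 \<le> norm (poly (lead_coeff q) z * w ^ d)"
      by (simp add: X_def norm_mult norm_power)
    have "evalq q z w = (\<Sum>m<d. poly (coeff q m) z * w ^ m) + poly (lead_coeff q) z * w ^ d"
      unfolding evalq_eq_sum q_deg by (simp add: lessThan_Suc_atMost[symmetric])
    then have "norm (poly (lead_coeff q) z * w ^ d)
        \<le> norm (evalq q z w) + norm (\<Sum>m<d. poly (coeff q m) z * w ^ m)"
      by (metis add_diff_cancel_left' norm_triangle_ineq4)
    moreover have "norm w ^ d \<le> X"
      using z R0(1) mult_right_mono[OF one_le_power[of "norm z" \<gamma>], of "norm w ^ d"]
      by (simp add: X_def)
    ultimately show "norm w ^ d / 4 \<le> norm (evalq q z w)" using lower lead by linarith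
  qed
qed


subsection \<open>Local uniform convergence on \<open>A\<^sub>p \<times> \<complex>\<close>\<close>

text \<open>Bound for \<open>F n\<close> below the curve \<open>\<bar>w\<bar> = R \<bar>z\<bar>\<^sup>\<alpha>\<close>, for points \<open>z\<close> with \<open>K z \<le> k\<close>.\<close>
definition eta :: "real \<Rightarrow> real \<Rightarrow> nat \<Rightarrow> real" where
  "eta R k n = (ln R + max \<alpha> 0 * real \<delta> ^ n * k) / real d ^ n"

lemma eta_nonneg: "1 \<le> R \<Longrightarrow> 0 \<le> k \<Longrightarrow> 0 \<le> eta R k n"
  unfolding eta_def by (intro divide_nonneg_nonneg add_nonneg_nonneg mult_nonneg_nonneg) auto

lemma eta_eq: "eta R k n = ln R * (1 / real d) ^ n + max \<alpha> 0 * k * (real \<delta> / real d) ^ n"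
  unfolding eta_def by (simp add: add_divide_distrib power_divide mult_ac)

lemma eta_antimono:
  assumes "1 \<le> R" "0 \<le> k" "m \<le> j"
  shows "eta R k j \<le> eta R k m"
proof -
  have "(1 / real d) ^ j \<le> (1 / real d) ^ m" "(real \<delta> / real d) ^ j \<le> (real \<delta> / real d) ^ m"
    using assms d_gt_1 \<delta>_lt by (auto intro!: power_decreasing)
  then show ?thesis
    unfolding eta_eq using assms by (intro add_mono mult_left_mono) auto
qed

lemma eta_tendsto_0: "eta R k \<longlonglongrightarrow> 0"
proof -
  have "(\<lambda>n. ln R * (1 / real d) ^ n + max \<alpha> 0 * k * (real \<delta> / real d) ^ n) \<longlonglongrightarrow> ln R * 0 + max \<alpha> 0 * k * 0"
    using d_gt_1 \<delta>_lt by (intro tendsto_intros LIMSEQ_power_zero) auto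
  then show ?thesis by (simp add: eta_eq[abs_def])
qed

text \<open>In the dominant region, one step of \<open>q\<close> multiplies \<open>\<bar>w\<bar>\<close> roughly by its \<open>d\<close>-th power, so
  \<open>F\<close> decreases by at most \<open>ln 4 / d\<^sup>n\<^sup>+\<^sup>1\<close>.\<close>
lemma F_Suc_ge_in_region:
  assumes dom: "\<And>z w. R0 \<le> norm z \<Longrightarrow> R * norm z powr \<alpha> \<le> norm w \<Longrightarrow> norm w ^ d / 4 \<le> norm (evalq q z w)"
    and "R0 \<le> norm (orbit j z)" "R * norm (orbit j z) powr \<alpha> \<le> norm (Qit p q j z w)"
  shows "F j z w - ln 4 / real d ^ Suc j \<le> F (Suc j) z w"
proof -
  have "real d * logplus (norm (Qit p q j z w)) - ln 4 \<le> logplus (norm (Qit p q (Suc j) z w))"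
    using dom[OF assms(2,3)] by (intro logplus_ge_of_power_le) auto
  then have "(real d * logplus (norm (Qit p q j z w)) - ln 4) / real d ^ Suc j \<le> F (Suc j) z w"
    unfolding F_def using d_gt_1 by (intro divide_right_mono) auto
  then show ?thesis using d_gt_1 by (simp add: F_def field_simps)
qed

lemma F_le_below_curve:
  assumes R: "1 \<le> R" and z1: "1 \<le> norm (orbit j z)"
    and w: "norm (Qit p q j z w) < R * norm (orbit j z) powr \<alpha>" and k: "K z \<le> k"
  shows "F j z w \<le> eta R k j"
proof -
  have "logplus (norm (Qit p q j z w)) \<le> logplus (R * norm (orbit j z) powr \<alpha>)"
    using w by (intro logplus_mono) auto
  also have "\<dots> \<le> logplus R + logplus (norm (orbit j z) powr \<alpha>)"
    using R by (intro logplus_mult_le) auto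
  also have "\<dots> \<le> ln R + max \<alpha> 0 * logplus (norm (orbit j z))"
    using logplus_powr_le[OF z1, of \<alpha>] logplus_eq_ln[OF R] by simp
  also have "\<dots> \<le> ln R + max \<alpha> 0 * (real \<delta> ^ j * k)"
    using orbit_logplus_le[of j z] mult_left_mono[OF k, of "real \<delta> ^ j"]
    by (intro add_left_mono mult_left_mono) auto
  finally show ?thesis
    unfolding F_def eta_def using d_gt_1 by (intro divide_right_mono) (auto simp: mult_ac)
qed

text \<open>Quantitative convergence: once the orbit of \<open>z\<close> stays near infinity, \<open>F m z w\<close> is within
  an explicit error of \<open>G z w\<close> that depends on \<open>z\<close> only through the bound \<open>K z \<le> k\<close>.\<close>
lemma F_close_to_G:
  assumes dom: "\<And>z w. R0 \<le> norm z \<Longrightarrow> R * norm z powr \<alpha> \<le> norm w \<Longrightarrow> norm w ^ d / 4 \<le> norm (evalq q z w)"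
    and R0: "1 \<le> R0" and R: "1 \<le> R" and k: "K z \<le> k"
    and beyond: "\<And>j. N \<le> j \<Longrightarrow> R0 \<le> norm (orbit j z)" and m: "N \<le> m"
  shows "\<bar>F m z w - G z w\<bar> \<le> (\<Sum>j. step_err (Cq + ln 4) k (j + m)) + eta R k m"
proof -
  define c where "c = Cq + ln 4"
  have c: "Cq \<le> c" "0 \<le> c" using Cq_nonneg by (auto simp: c_def)
  have k0: "0 \<le> k" using k K_nonneg[of z] by linarith
  have down: "F j z w - step_err c k j \<le> F (Suc j) z w \<or> F j z w \<le> eta R k m" if "m \<le> j" for j
  proof (cases "R * norm (orbit j z) powr \<alpha> \<le> norm (Qit p q j z w)")
    case True
    have "ln 4 / real d ^ Suc j \<le> step_err c k j"
      unfolding step_err_def c_def using Cq_nonneg k0 E_nonneg d_gt_1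
      by (intro divide_right_mono) auto
    then show ?thesis using F_Suc_ge_in_region[OF dom beyond True] m that by force
  next
    case False
    then have "F j z w \<le> eta R k j"
      using beyond[of j] m that R0 by (intro F_le_below_curve[OF R _ _ k]) auto
    then show ?thesis using eta_antimono[OF R k0 that] by simp
  qed
  have near: "\<bar>F (m + i) z w - F m z w\<bar> \<le> (\<Sum>j. step_err c k (j + m)) + eta R k m" for i
    using F_Suc_le[OF c(1) k] down step_err_nonneg[OF c(2) k0] F_nonneg eta_nonneg[OF R k0]
      partial_tail_le_suminf_tail[OF summable_step_err step_err_nonneg[OF c(2) k0]]
    by (intro almost_constant_from) auto
  have "(\<lambda>i. \<bar>F (m + i) z w - F m z w\<bar>) \<longlonglongrightarrow> \<bar>G z w - F m z w\<bar>"
    using LIMSEQ_ignore_initial_segment[OF F_tendsto_G, of m]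
    by (intro tendsto_intros) (simp add: add.commute)
  then have "\<bar>G z w - F m z w\<bar> \<le> (\<Sum>j. step_err c k (j + m)) + eta R k m"
    by (rule LIMSEQ_le_const2) (use near in auto)
  then show ?thesis by (simp add: c_def abs_minus_commute)
qed

lemma continuous_on_Qit:
  "continuous_on S f \<Longrightarrow> continuous_on S g \<Longrightarrow> continuous_on S (\<lambda>x. Qit p q n (f x) (g x))"
proof (induction n)
  case (Suc n)
  show ?case unfolding Qit.simps evalq_eq_sum
    by (intro continuous_intros continuous_on_orbit Suc)
qed simp

lemma continuous_on_F: "continuous_on S (\<lambda>x. F n (fst x) (snd x))"
  unfolding F_def using d_gt_1
  by (intro continuous_intros continuous_on_compose2[OF continuous_on_logplus] continuous_on_Qit) auto

lemma locally_uniform_F: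
  assumes z0: "z0 \<in> escape_set p"
  obtains U where "open U" "z0 \<in> U" "U \<subseteq> escape_set p"
    "uniform_limit (U \<times> UNIV) (\<lambda>m x. F m (fst x) (snd x)) (\<lambda>x. G (fst x) (snd x)) sequentially"
proof -
  obtain R0 R where R0: "1 \<le> R0" and R: "1 \<le> R"
    and dom: "\<And>z w. R0 \<le> norm z \<Longrightarrow> R * norm z powr \<alpha> \<le> norm w \<Longrightarrow> norm w ^ d / 4 \<le> norm (evalq q z w)"
    using dominant_region by blast
  obtain Rs where Rs: "1 \<le> Rs" "\<And>x. Rs \<le> norm x \<Longrightarrow> 2 * norm x \<le> norm (poly p x)"
    using escape_radius by blast
  define R1 where "R1 = max R0 Rs"
  have R1: "1 \<le> R1" "\<And>x. R1 \<le> norm x \<Longrightarrow> 2 * norm x \<le> norm (poly p x)"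
    using Rs by (auto simp: R1_def)
  obtain N where N: "R1 < norm (orbit N z0)" using escape_set_iff[OF R1] z0 by blast
  define U where "U = ball z0 1 \<inter> {z. R1 < norm (orbit N z)}"
  define k where "k = logplus (norm z0 + 1) + Cp"
  show ?thesis
  proof
    show "open U" unfolding U_def
      by (intro open_Int open_ball open_Collect_less continuous_intros continuous_on_orbit)
    show "z0 \<in> U" using N by (simp add: U_def)
    show "U \<subseteq> escape_set p" using escape_set_iff[OF R1] by (auto simp: U_def)
    have bound: "\<bar>F m z w - G z w\<bar> \<le> (\<Sum>j. step_err (Cq + ln 4) k (j + m)) + eta R k m"
      if "N \<le> m" "z \<in> U" for m z w
    proof (rule F_close_to_G[OF dom R0 R _ _ that(1)])
      have "norm z \<le> norm z0 + 1"
        using that(2) norm_triangle_sub[of z z0] by (auto simp: U_def dist_norm norm_minus_commute)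
      then show "K z \<le> k" unfolding K_def k_def by (simp add: logplus_mono)
      show "R0 \<le> norm (orbit j z)" if "N \<le> j" for j
        using orbit_stays_beyond[OF R1 _ that, of z] \<open>z \<in> U\<close> by (auto simp: U_def R1_def)
    qed
    have "(\<lambda>m. (\<Sum>j. step_err (Cq + ln 4) k (j + m)) + eta R k m) \<longlonglongrightarrow> 0 + 0"
      by (intro tendsto_add suminf_tail_tendsto_0 summable_step_err eta_tendsto_0)
    then show "uniform_limit (U \<times> UNIV) (\<lambda>m x. F m (fst x) (snd x)) (\<lambda>x. G (fst x) (snd x)) sequentially"
      using bound by (intro uniform_limit_if_bound[of N]) auto
  qed
qed

lemma continuous_on_G: "continuous_on (escape_set p \<times> UNIV) (\<lambda>(z, w). G z w)"
proof -
  have "isCont (\<lambda>x. G (fst x) (snd x)) x" if x: "x \<in> escape_set p \<times> UNIV" for x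
  proof -
    have "fst x \<in> escape_set p" using x by auto
    then obtain U where U: "open U" "fst x \<in> U"
      and ul: "uniform_limit (U \<times> UNIV) (\<lambda>m x. F m (fst x) (snd x)) (\<lambda>x. G (fst x) (snd x)) sequentially"
      by (rule locally_uniform_F) blast
    have "continuous_on (U \<times> UNIV) (\<lambda>x. G (fst x) (snd x))"
      by (rule uniform_limit_theorem[OF _ ul]) (auto intro!: always_eventually continuous_on_F)
    moreover have "open (U \<times> (UNIV :: complex set))" "x \<in> U \<times> UNIV"
      using U by (auto intro: open_Times simp: mem_Times_iff)
    ultimately show ?thesis using continuous_on_eq_continuous_at by blast
  qed
  then show ?thesis
    by (simp add: case_prod_beta' continuous_at_imp_continuous_on)
qed


subsection \<open>Plurisubharmonicity\<close>

text \<open>Restricted to a complex line, \<open>F m\<close> is \<open>log\<^sup>+\<close> of the modulus of a polynomial divided by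
  \<open>d\<^sup>m\<close>, hence it satisfies the sub-mean value inequality on every circle.\<close>
lemma F_submean_on_lines:
  assumes r: "0 < r"
  shows "2 * pi * F m (a1 + s * b1) (a2 + s * b2)
     \<le> integral {0..2*pi} (\<lambda>t. F m (a1 + (s + of_real r * cis t) * b1) (a2 + (s + of_real r * cis t) * b2))"
proof -
  have "is_poly_fun (\<lambda>s. Qit p q n (a1 + s * b1) (a2 + s * b2))" for n
  proof (induction n)
    case (Suc n)
    have "is_poly_fun (\<lambda>s. orbit j (a1 + s * b1))" for j
      by (induction j) (auto intro: is_poly_fun_affine is_poly_fun_compose)
    then show ?case unfolding Qit.simps evalq_eq_sum
      by (intro is_poly_fun_sum is_poly_fun_mult is_poly_fun_compose is_poly_fun_power Suc) auto
  qed (simp add: is_poly_fun_affine)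
  then obtain P where P: "\<And>s. Qit p q m (a1 + s * b1) (a2 + s * b2) = poly P s"
    unfolding is_poly_fun_def by blast
  have "2 * pi * logplus (norm (poly P s)) / real d ^ m
      \<le> integral {0..2*pi} (\<lambda>t. logplus (norm (poly P (s + of_real r * cis t)))) / real d ^ m"
    using submean_logplus_poly[OF r] d_gt_1 by (intro divide_right_mono) auto
  then show ?thesis unfolding F_def P by simp
qed

lemma plurisubharmonic_G: "plurisubharmonic_on (escape_set p \<times> UNIV) (\<lambda>(z, w). G z w)"
proof (rule plurisubharmonic_on_if_locally_uniform_limit[where F = "\<lambda>m x. F m (fst x) (snd x)"])
  show "open (escape_set p \<times> (UNIV :: complex set))" by (intro open_Times open_escape_set) auto
  show "continuous_on (escape_set p \<times> UNIV) (\<lambda>(z, w). G z w)" by (rule continuous_on_G)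
  show "continuous_on UNIV (\<lambda>x. F m (fst x) (snd x))" for m by (rule continuous_on_F)
  show "2 * pi * F m (fst (a + (s * fst b, s * snd b))) (snd (a + (s * fst b, s * snd b)))
      \<le> integral {0..2*pi} (\<lambda>t. F m (fst (a + ((s + of_real r * cis t) * fst b, (s + of_real r * cis t) * snd b)))
                                    (snd (a + ((s + of_real r * cis t) * fst b, (s + of_real r * cis t) * snd b))))"
    if "0 < r" for m a b s r
    using F_submean_on_lines[OF that] by simp
next
  fix x :: "complex \<times> complex" assume "x \<in> escape_set p \<times> UNIV"
  then have "fst x \<in> escape_set p" by auto
  then obtain U where U: "open U" "fst x \<in> U" "U \<subseteq> escape_set p"
    and ul: "uniform_limit (U \<times> UNIV) (\<lambda>m x. F m (fst x) (snd x)) (\<lambda>x. G (fst x) (snd x)) sequentially"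
    by (rule locally_uniform_F)
  have G_eq: "(\<lambda>x. G (fst x) (snd x)) = (\<lambda>(z, w). G z w)" by (simp add: case_prod_beta')
  show "\<exists>V. open V \<and> x \<in> V \<and> V \<subseteq> escape_set p \<times> UNIV \<and>
      uniform_limit V (\<lambda>m x. F m (fst x) (snd x)) (\<lambda>(z, w). G z w) sequentially"
  proof (intro exI[of _ "U \<times> UNIV"] conjI)
    show "open (U \<times> (UNIV :: complex set))" using U(1) by (intro open_Times) auto
    show "x \<in> U \<times> UNIV" using U(2) by (cases x) simp
    show "U \<times> UNIV \<subseteq> escape_set p \<times> UNIV" using U(3) by blast
    show "uniform_limit (U \<times> UNIV) (\<lambda>m x. F m (fst x) (snd x)) (\<lambda>(z, w). G z w) sequentially"
      using ul by (simp only: G_eq)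
  qed
qed

subsection \<open>Other normalisations of the Green function\<close>

lemma tendsto_logplus_max_G:
  assumes "(\<lambda>n. logplus (X n) / real d ^ n) \<longlonglongrightarrow> 0"
  shows "(\<lambda>n. logplus (max (X n) (norm (Qit p q n z w))) / real d ^ n) \<longlonglongrightarrow> G z w"
proof -
  have "(\<lambda>n. max (logplus (X n) / real d ^ n) (F n z w)) \<longlonglongrightarrow> max 0 (G z w)"
    by (intro tendsto_max assms F_tendsto_G)
  then show ?thesis
    using G_nonneg by (simp add: F_def logplus_max max_divide_distrib_right max_absorb2)
qed

lemma Gf_tendsto:
  "(\<lambda>n. logplus (max (norm (orbit n z)) (norm (Qit p q n z w))) / real d ^ n) \<longlonglongrightarrow> G z w"
  by (rule tendsto_logplus_max_G[OF orbit_logplus_ratio_tendsto_0])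

lemma Gf_alpha_tendsto:
  "(\<lambda>n. logplus (max (rpow (norm (orbit n z)) (max \<alpha> 0)) (norm (Qit p q n z w))) / real d ^ n)
     \<longlonglongrightarrow> G z w"
proof (rule tendsto_logplus_max_G)
  show "(\<lambda>n. logplus (rpow (norm (orbit n z)) (max \<alpha> 0)) / real d ^ n) \<longlonglongrightarrow> 0"
  proof (rule tendsto_sandwich[of "\<lambda>_. 0" _ _ "\<lambda>n. max \<alpha> 0 * (logplus (norm (orbit n z)) / real d ^ n)"])
    show "\<forall>\<^sub>F n in sequentially. logplus (rpow (norm (orbit n z)) (max \<alpha> 0)) / real d ^ n
        \<le> max \<alpha> 0 * (logplus (norm (orbit n z)) / real d ^ n)"
      using logplus_rpow_le[of _ "max \<alpha> 0"] d_gt_1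
      by (intro always_eventually allI) (simp add: divide_right_mono)
    show "(\<lambda>n. max \<alpha> 0 * (logplus (norm (orbit n z)) / real d ^ n)) \<longlonglongrightarrow> 0"
      using tendsto_mult_left[OF orbit_logplus_ratio_tendsto_0, of "max \<alpha> 0" z] by simp
  qed (auto simp: logplus_nonneg)
qed

text \<open>On \<open>A\<^sub>p\<close>, dividing \<open>Q\<^sub>z\<^sup>n(w)\<close> by \<open>\<bar>p\<^sup>n(z)\<bar>\<^sup>\<alpha>\<close> changes \<open>log\<^sup>+\<close> by at most
  \<open>\<bar>\<alpha>\<bar> log \<bar>p\<^sup>n(z)\<bar> = o(d\<^sup>n)\<close>.\<close>
lemma G_alpha_tendsto:
  assumes z: "z \<in> escape_set p"
  shows "(\<lambda>n. logplus (norm (Qit p q n z w) / rpow (norm (orbit n z)) \<alpha>) / real d ^ n) \<longlonglongrightarrow> G z w"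
proof (rule tendsto_logplus_divide)
  obtain R where R: "1 \<le> R" "\<And>x. R \<le> norm x \<Longrightarrow> 2 * norm x \<le> norm (poly p x)"
    using escape_radius by blast
  obtain N where N: "R \<le> norm (orbit N z)" using escape_set_iff[OF R] z less_imp_le by blast
  have large: "eventually (\<lambda>n. 1 \<le> norm (orbit n z)) sequentially"
    using orbit_stays_beyond[OF R N] R(1) by (auto simp: eventually_sequentially intro: order.trans)
  then show "eventually (\<lambda>n. 0 < rpow (norm (orbit n z)) \<alpha>) sequentially"
    by eventually_elim (auto simp: rpow_def)
  have eq: "eventually (\<lambda>n. \<alpha> * (logplus (norm (orbit n z)) / real d ^ n)
      = ln (rpow (norm (orbit n z)) \<alpha>) / real d ^ n) sequentially"
    using large by eventually_elim (auto simp: rpow_def ln_powr logplus_eq_ln)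
  have "(\<lambda>n. \<alpha> * (logplus (norm (orbit n z)) / real d ^ n)) \<longlonglongrightarrow> \<alpha> * 0"
    by (intro tendsto_mult_left orbit_logplus_ratio_tendsto_0)
  from Lim_transform_eventually[OF this eq]
  show "(\<lambda>n. ln (rpow (norm (orbit n z)) \<alpha>) / real d ^ n) \<longlonglongrightarrow> 0" by simp
qed (use F_tendsto_G d_gt_1 in \<open>auto simp: F_def\<close>)

end

theorem corollary5p5:
  fixes p :: "complex poly" and q :: "complex poly poly" and \<delta> d \<gamma> :: nat
  assumes p_monic: "lead_coeff p = 1" and p_deg: "degree p = \<delta>" and \<delta>_ge: "\<delta> \<ge> 2"
    and q_deg: "degree q = d" and d_ge: "d \<ge> 2"
    and b_monic: "lead_coeff (lead_coeff q) = 1" and b_deg: "degree (lead_coeff q) = \<gamma>"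
    and \<delta>_lt: "\<delta> < d" and \<gamma>_ge: "\<gamma> \<ge> 1"
  defines "\<alpha> \<equiv> alpha_exp p q"
  shows "\<exists>G Gf Gfa :: complex \<Rightarrow> complex \<Rightarrow> real.
     (\<forall>z w. (\<lambda>n. logplus (cmod (Qit p q n z w)) / real d ^ n) \<longlonglongrightarrow> G z w)
   \<and> continuous_on (escape_set p \<times> UNIV) (\<lambda>(z, w). G z w)
   \<and> plurisubharmonic_on (escape_set p \<times> UNIV) (\<lambda>(z, w). G z w)
   \<and> (\<forall>z w. (\<lambda>n. logplus (max (cmod ((poly p ^^ n) z)) (cmod (Qit p q n z w))) / real d ^ n)
               \<longlonglongrightarrow> Gf z w)
   \<and> (\<forall>z w. (\<lambda>n. logplus (max (rpow (cmod ((poly p ^^ n) z)) (max \<alpha> 0)) (cmod (Qit p q n z w)))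
                    / real d ^ n) \<longlonglongrightarrow> Gfa z w)
   \<and> (\<forall>z w. G z w = Gf z w \<and> G z w = Gfa z w)
   \<and> (\<forall>z\<in>escape_set p. \<forall>w.
        (\<lambda>n. logplus (cmod (Qit p q n z w) / rpow (cmod ((poly p ^^ n) z)) \<alpha>) / real d ^ n)
          \<longlonglongrightarrow> G z w)"
proof -
  interpret skew_product p q \<delta> d \<gamma>
    using p_monic p_deg \<delta>_ge q_deg d_ge b_monic b_deg \<delta>_lt \<gamma>_ge by unfold_locales
  show ?thesis unfolding \<alpha>_def
  proof (intro exI[of _ G] conjI allI ballI refl)
    show "(\<lambda>n. logplus (cmod (Qit p q n z w)) / real d ^ n) \<longlonglongrightarrow> G z w" for z w
      using F_tendsto_G[of z w] by (simp add: F_def)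
  qed (simp_all add: continuous_on_G plurisubharmonic_G Gf_tendsto Gf_alpha_tendsto G_alpha_tendsto)
qed

end
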